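(* Let $I\subseteq\{1,\dots,m\}$, let $A\subseteq F_I(\Gamma^m)$ be a definable set all of whose points have non-negative coordinates, and let $f_1,\dots,f_r$ be definable maps from $A$ to $\mathcal{Q}$. Then there exists a largely continuous, positive, integrally affine map $f:A\to\mathcal{Z}$ such that $f(x)\geq\max_jf_j(x)$ for all $x\in A$ and $\bar f=+\infty$ on $\partial A$. More precisely, $f$ can be taken of the form $f(x)=\beta+\alpha\sum_{i\in I}x_i$ on $A$, for some positive $\alpha\in\mathbb{Z}$ and $\beta\in\mathcal{Z}$.
   Context: $\mathcal{Z}$ is a $\mathbb{Z}$-group (linearly ordered abelian group with smallest positive element $1$, $|\mathcal{Z}/n\mathcal{Z}|=n$ for all $n\geq1$), $\mathcal{Q}$ its divisible hull, $\Gamma=\mathcal{Z}\cup\{+\infty\}$, $\Omega=\mathcal{Q}\cup\{+\infty\}$. Topology on $\Omega$ generated by open intervals and $]a,+\infty]$; product topology on $\Omega^m$; $\overline A$ closure; frontier $\partial A$ = closure of $\overline A\setminus A$. $F_I(\Gamma^m)$: points of $\Gamma^m$ whose non-$+\infty$ coordinates are exactly those indexed by $I$, identified with $\mathcal{Z}^{|I|}$. Definable: $A\subseteq\Gamma^m$ is definable if each $A\cap F_K(\Gamma^m)$ is first-order definable with parameters in $\mathcal{Z}$ in the Presburger language $\{0,1,+,\leq,(\equiv_n)_{n\geq1}\}$; $g:A\to\Omega$ is definable if for some integer $n\geq1$, $ng$ takes values in $\Gamma$ and on each $A\cap F_K(\Gamma^m)$ is either constantly $+\infty$ or a map into $\mathcal{Z}$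 with definable graph. $f$ is integrally affine on $A\subseteq F_I(\Gamma^m)$ if $f(a)=\alpha_0+\sum_{i\in I}\alpha_ia_i$ with $\alpha_0\in\mathcal{Z}$, $\alpha_i\in\mathbb{Z}$; largely continuous if it extends to a continuous $\bar f$ on $\overline A$; positive if $f>0$ on $A$. *)

theory Defs
  imports "HOL-Analysis.Analysis"
begin

primrec nmul :: "nat \<Rightarrow> 'a::ab_group_add \<Rightarrow> 'a" where
  "nmul 0 x = 0"
| "nmul (Suc n) x = x + nmul n x"

definition zmul :: "int \<Rightarrow> 'a::ab_group_add \<Rightarrow> 'a" where
  "zmul k x = (if 0 \<le> k then nmul (nat k) x else - nmul (nat (- k)) x)"

text \<open>A Z-group: a linearly ordered abelian group with smallest positive element e
  (playing the role of 1) such that Z/nZ has exactly n elements for every n \<ge> 1.\<close>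
definition zgroup :: "'z::linordered_ab_group_add \<Rightarrow> bool" where
  "zgroup e \<longleftrightarrow> 0 < e \<and> (\<forall>x. 0 < x \<longrightarrow> e \<le> x) \<and>
     (\<forall>n\<ge>1. card ((UNIV::'z set) // {(x, y). \<exists>q. x - y = nmul n q}) = n)"

definition divisible_hull :: "('z::linordered_ab_group_add \<Rightarrow> 'q::linordered_ab_group_add) \<Rightarrow> bool" where
  "divisible_hull iota \<longleftrightarrow>
     (\<forall>a b. iota (a + b) = iota a + iota b) \<and>
     (\<forall>a b. a < b \<longrightarrow> iota a < iota b) \<and>
     (\<forall>y::'q. \<forall>n\<ge>1. \<exists>w. nmul n w = y) \<and>
     (\<forall>y. \<exists>n\<ge>1. nmul n y \<in> range iota)"

datatype 'a ext = Fin 'a | PInf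

fun eless :: "'a::linorder ext \<Rightarrow> 'a ext \<Rightarrow> bool" where
  "eless (Fin a) (Fin b) = (a < b)"
| "eless (Fin a) PInf = True"
| "eless PInf _ = False"

fun emap :: "('a \<Rightarrow> 'b) \<Rightarrow> 'a ext \<Rightarrow> 'b ext" where
  "emap g (Fin a) = Fin (g a)"
| "emap g PInf = PInf"

fun eval :: "'a::zero ext \<Rightarrow> 'a" where
  "eval (Fin a) = a"
| "eval PInf = 0"

text \<open>Topology on Omega = Q \<union> {+\<infinity>}: generated by the open intervals ]a,b[ and
  the intervals ]a,+\<infinity>].\<close>
definition Omega_top :: "'q::linorder ext topology" where
  "Omega_top = topology_generated_by
     ({{y. eless a y \<and> eless y b} | a b. True} \<union> {{y. eless a y} | a. True})"

text \<open>Omega^m with the product topology; points are functions on {1..m}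
  (extensional, i.e. undefined outside {1..m}).\<close>
definition Omega_m_top :: "nat \<Rightarrow> (nat \<Rightarrow> 'q::linorder ext) topology" where
  "Omega_m_top m = product_topology (\<lambda>_. Omega_top) {1..m}"

text \<open>Points of Gamma^m (Gamma = Z \<union> {+\<infinity>}).\<close>
definition Gamma_m :: "nat \<Rightarrow> (nat \<Rightarrow> 'z ext) set" where
  "Gamma_m m = PiE {1..m} (\<lambda>_. UNIV)"

definition F_I :: "nat \<Rightarrow> nat set \<Rightarrow> (nat \<Rightarrow> 'z ext) set" where
  "F_I m I = {x \<in> Gamma_m m. \<forall>i\<in>{1..m}. (x i \<noteq> PInf \<longleftrightarrow> i \<in> I)}"

definition lift :: "nat \<Rightarrow> ('z \<Rightarrow> 'q) \<Rightarrow> (nat \<Rightarrow> 'z ext) \<Rightarrow> (nat \<Rightarrow> 'q ext)" where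
  "lift m iota x = restrict (\<lambda>i. emap iota (x i)) {1..m}"

datatype 'z pterm = PVar nat | PPar 'z | PZero | POne | PPlus "'z pterm" "'z pterm"

datatype 'z pform = PEq "'z pterm" "'z pterm" | PLe "'z pterm" "'z pterm"
  | PCong nat "'z pterm" "'z pterm" | PNeg "'z pform" | PConj "'z pform" "'z pform"
  | PEx nat "'z pform"

primrec tval :: "'z::linordered_ab_group_add \<Rightarrow> (nat \<Rightarrow> 'z) \<Rightarrow> 'z pterm \<Rightarrow> 'z" where
  "tval e env (PVar i) = env i"
| "tval e env (PPar c) = c"
| "tval e env PZero = 0"
| "tval e env POne = e"
| "tval e env (PPlus s t) = tval e env s + tval e env t"

primrec psat :: "'z::linordered_ab_group_add \<Rightarrow> (nat \<Rightarrow> 'z) \<Rightarrow> 'z pform \<Rightarrow> bool" where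
  "psat e env (PEq s t) = (tval e env s = tval e env t)"
| "psat e env (PLe s t) = (tval e env s \<le> tval e env t)"
| "psat e env (PCong n s t) = (\<exists>q. tval e env s - tval e env t = nmul n q)"
| "psat e env (PNeg \<phi>) = (\<not> psat e env \<phi>)"
| "psat e env (PConj \<phi> \<psi>) = (psat e env \<phi> \<and> psat e env \<psi>)"
| "psat e env (PEx i \<phi>) = (\<exists>z. psat e (env(i := z)) \<phi>)"

text \<open>Identification of F_K(Gamma^m) with Z^|K|: variable i (i in K) is the i-th coordinate.
  Variable 0 is unused by coordinates and serves as the output variable of graphs.\<close>
definition coord_env :: "nat set \<Rightarrow> (nat \<Rightarrow> 'z::zero ext) \<Rightarrow> nat \<Rightarrow> 'z" where
  "coord_env K x = (\<lambda>i. if i \<in> K then eval (x i) else 0)"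

definition definable_set :: "'z::linordered_ab_group_add \<Rightarrow> nat \<Rightarrow> (nat \<Rightarrow> 'z ext) set \<Rightarrow> bool" where
  "definable_set e m A \<longleftrightarrow> A \<subseteq> Gamma_m m \<and>
     (\<forall>K\<subseteq>{1..m}. \<exists>\<phi>. \<forall>x\<in>F_I m K. (x \<in> A \<longleftrightarrow> psat e (coord_env K x) \<phi>))"

definition emul :: "nat \<Rightarrow> 'q::ab_group_add ext \<Rightarrow> 'q ext" where
  "emul n y = (case y of Fin a \<Rightarrow> Fin (nmul n a) | PInf \<Rightarrow> PInf)"

definition definable_fun :: "'z::linordered_ab_group_add \<Rightarrow> ('z \<Rightarrow> 'q::linordered_ab_group_add) \<Rightarrow> nat
     \<Rightarrow> (nat \<Rightarrow> 'z ext) set \<Rightarrow> ((nat \<Rightarrow> 'z ext) \<Rightarrow> 'q ext) \<Rightarrow> bool" where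
  "definable_fun e iota m A g \<longleftrightarrow> (\<exists>n\<ge>1.
     (\<forall>x\<in>A. emul n (g x) \<in> range (emap iota)) \<and>
     (\<forall>K\<subseteq>{1..m}.
        (\<forall>x\<in>A \<inter> F_I m K. g x = PInf) \<or>
        ((\<forall>x\<in>A \<inter> F_I m K. g x \<noteq> PInf) \<and>
         (\<exists>\<psi>. \<forall>x\<in>F_I m K. \<forall>z. (x \<in> A \<and> emul n (g x) = Fin (iota z))
                 \<longleftrightarrow> psat e ((coord_env K x)(0 := z)) \<psi>))))"

definition integrally_affine :: "nat set \<Rightarrow> (nat \<Rightarrow> 'z::linordered_ab_group_add ext) set
     \<Rightarrow> ((nat \<Rightarrow> 'z ext) \<Rightarrow> 'z) \<Rightarrow> bool" where
  "integrally_affine I A f \<longleftrightarrow> (\<exists>a0 (a::nat \<Rightarrow> int). \<forall>x\<in>A.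
      f x = a0 + (\<Sum>i\<in>I. zmul (a i) (eval (x i))))"

definition gclosure :: "nat \<Rightarrow> ('z \<Rightarrow> 'q::linorder) \<Rightarrow> (nat \<Rightarrow> 'z ext) set \<Rightarrow> (nat \<Rightarrow> 'q ext) set" where
  "gclosure m iota A = Omega_m_top m closure_of (lift m iota ` A)"

definition gfrontier :: "nat \<Rightarrow> ('z \<Rightarrow> 'q::linorder) \<Rightarrow> (nat \<Rightarrow> 'z ext) set \<Rightarrow> (nat \<Rightarrow> 'q ext) set" where
  "gfrontier m iota A = Omega_m_top m closure_of (gclosure m iota A - lift m iota ` A)"

definition cont_extension :: "nat \<Rightarrow> ('z \<Rightarrow> 'q::linorder) \<Rightarrow> (nat \<Rightarrow> 'z ext) set
     \<Rightarrow> ((nat \<Rightarrow> 'z ext) \<Rightarrow> 'z) \<Rightarrow> ((nat \<Rightarrow> 'q ext) \<Rightarrow> 'q ext) \<Rightarrow> bool" where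
  "cont_extension m iota A f fbar \<longleftrightarrow>
     continuous_map (subtopology (Omega_m_top m) (gclosure m iota A)) Omega_top fbar \<and>
     (\<forall>x\<in>A. fbar (lift m iota x) = Fin (iota (f x)))"

definition largely_continuous :: "nat \<Rightarrow> ('z \<Rightarrow> 'q::linorder) \<Rightarrow> (nat \<Rightarrow> 'z ext) set
     \<Rightarrow> ((nat \<Rightarrow> 'z ext) \<Rightarrow> 'z) \<Rightarrow> bool" where
  "largely_continuous m iota A f \<longleftrightarrow> (\<exists>fbar. cont_extension m iota A f fbar)"

end

theory Submission
  imports Defs
begin

text \<open>On the stratum \<open>F_I\<close> each \<open>f\<^sub>j\<close> has, up to a factor \<open>n\<close>, a graph defined by a
  Presburger formula in the coordinates. Cooper's quantifier elimination, which works over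
  any Z-group, turns it into a disjunction of conjunctions of linear inequalities and
  congruences. Because the value is unique, the satisfied conjunction contains an inequality
  bounding it from above (otherwise adding a common period would give a second solution), so
  \<open>f\<^sub>j(x) \<le> b + c \<Sum>\<^sub>i\<^sub>\<in>\<^sub>I x\<^sub>i\<close>, using that the coordinates are non-negative.
  Then \<open>f = (1 + b) + (c + 1) \<Sum>\<^sub>i\<^sub>\<in>\<^sub>I x\<^sub>i\<close> is a positive majorant. It extends by \<open>+\<infinity>\<close>
  to the points of the closure with an infinite \<open>I\<close>-coordinate, continuously because the
  coordinates are non-negative; the remaining points of the closure are isolated lifted
  points, as a Z-group is discrete in its divisible hull, so they do not lie on the frontier.\<close>

section \<open>Integer multiples in ordered abelian groups\<close>

lemma nmul_add: "nmul (a + b) x = nmul a x + nmul b x"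
  by (induction a) (simp_all add: add.assoc)

lemma nmul_add_right: "nmul n (x + y) = nmul n x + nmul n y"
  by (induction n) (simp_all add: algebra_simps)

lemma nmul_zero [simp]: "nmul n 0 = 0"
  by (induction n) simp_all

lemma nmul_minus: "nmul n (- x) = - nmul n x"
  by (induction n) (simp_all add: algebra_simps)

lemma nmul_diff_right: "nmul n (x - y) = nmul n x - nmul n y"
  using nmul_add_right[of n x "-y"] nmul_minus[of n y] by simp

lemma nmul_mult: "nmul (a * b) x = nmul a (nmul b x)"
  by (induction a) (simp_all add: nmul_add nmul_add_right)

lemma nmul_diff: "b \<le> a \<Longrightarrow> nmul (a - b) x = nmul a x - nmul b x"
  using nmul_add[of "a - b" b x] by simp

lemma nmul_hom:
  assumes "\<And>a b. h (a + b) = h a + h b"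
  shows "h (nmul n x) = nmul n (h x)"
proof -
  have "h 0 = 0" using assms[of 0 0] by simp
  then show ?thesis by (induction n) (simp_all add: assms)
qed

lemma zmul_of_nat_diff: "zmul (int a - int b) x = nmul a x - nmul b x"
proof (cases "b \<le> a")
  case True
  then have "nat (int a - int b) = a - b" by simp
  then show ?thesis using True by (simp add: zmul_def nmul_diff)
next
  case False
  then have "nat (- (int a - int b)) = b - a" by simp
  then show ?thesis using False by (simp add: zmul_def nmul_diff)
qed

lemma zmul_of_nat [simp]: "zmul (int a) x = nmul a x"
  using zmul_of_nat_diff[of a 0 x] by simp

lemma zmul_0 [simp]: "zmul 0 x = 0"
  by (simp add: zmul_def)

lemma zmul_1 [simp]: "zmul 1 x = x"
  by (simp add: zmul_def)

lemma zmul_add: "zmul (k + l) x = zmul k x + zmul l x"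
proof -
  obtain a b where k: "k = int a - int b" by (rule int_diff_cases)
  obtain c d where l: "l = int c - int d" by (rule int_diff_cases)
  have "k + l = int (a + c) - int (b + d)" using k l by simp
  then have "zmul (k + l) x = nmul (a + c) x - nmul (b + d) x" by (simp only: zmul_of_nat_diff)
  then show ?thesis unfolding k l zmul_of_nat_diff nmul_add by (simp add: algebra_simps)
qed

lemma zmul_uminus: "zmul (- k) x = - zmul k x"
  using zmul_add[of k "- k" x] by (simp add: eq_neg_iff_add_eq_0 add.commute)

lemma zmul_add_right: "zmul k (x + y) = zmul k x + zmul k y"
proof -
  obtain a b where k: "k = int a - int b" by (rule int_diff_cases)
  show ?thesis unfolding k zmul_of_nat_diff nmul_add_right by (simp add: algebra_simps)
qed

lemma zmul_zero [simp]: "zmul k 0 = 0"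
  using zmul_add_right[of k 0 0] by simp

lemma zmul_minus: "zmul k (- x) = - zmul k x"
  using zmul_add_right[of k x "- x"] by (simp add: eq_neg_iff_add_eq_0 add.commute)

lemma zmul_diff_right: "zmul k (x - y) = zmul k x - zmul k y"
  using zmul_add_right[of k x "- y"] zmul_minus[of k y] by simp

lemma zmul_nmul: "zmul k (nmul n x) = nmul n (zmul k x)"
proof -
  obtain a b where "k = int a - int b" by (rule int_diff_cases)
  then show ?thesis
    by (simp add: zmul_of_nat_diff nmul_diff_right flip: nmul_mult) (simp add: mult.commute)
qed

lemma zmul_mult: "zmul (k * l) x = zmul k (zmul l x)"
proof -
  obtain a b where k: "k = int a - int b" by (rule int_diff_cases)
  obtain c d where l: "l = int c - int d" by (rule int_diff_cases)
  have "k * l = int (a * c + b * d) - int (a * d + b * c)"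
    unfolding k l by (simp add: algebra_simps)
  then have "zmul (k * l) x = nmul (a * c + b * d) x - nmul (a * d + b * c) x"
    by (simp only: zmul_of_nat_diff)
  also have "\<dots> = (nmul c (nmul a x) - nmul c (nmul b x)) - (nmul d (nmul a x) - nmul d (nmul b x))"
    by (simp add: nmul_add mult.commute[of a c] mult.commute[of a d] mult.commute[of b c]
        mult.commute[of b d] nmul_mult)
  also have "\<dots> = zmul k (zmul l x)"
    unfolding l zmul_of_nat_diff zmul_diff_right zmul_nmul
    unfolding k zmul_of_nat_diff nmul_diff_right ..
  finally show ?thesis .
qed

lemma zmul_sum: "zmul k (sum f S) = (\<Sum>i\<in>S. zmul k (f i))"
  using sum_comp_morphism[of "zmul k" f S] by (simp add: zmul_add_right comp_def)

lemma nmul_nonneg: "0 \<le> (x::'a::linordered_ab_group_add) \<Longrightarrow> 0 \<le> nmul n x"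
  by (induction n) simp_all

lemma nmul_mono: "(x::'a::linordered_ab_group_add) \<le> y \<Longrightarrow> nmul n x \<le> nmul n y"
  by (induction n) (simp_all add: add_mono)

lemma nmul_strict_mono:
  "(x::'a::linordered_ab_group_add) < y \<Longrightarrow> n \<ge> 1 \<Longrightarrow> nmul n x < nmul n y"
proof (induction n)
  case (Suc n)
  then show ?case by (cases "n = 0") (simp_all add: add_strict_mono)
qed simp

lemma nmul_le_iff:
  "n \<ge> 1 \<Longrightarrow> nmul n x \<le> nmul n (y::'a::linordered_ab_group_add) \<longleftrightarrow> x \<le> y"
  using nmul_strict_mono[of y x n] nmul_mono[of x y n] by (meson not_le)

lemma nmul_inj: "n \<ge> 1 \<Longrightarrow> nmul n x = nmul n (y::'a::linordered_ab_group_add) \<longleftrightarrow> x = y"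
  using nmul_le_iff[of n x y] nmul_le_iff[of n y x] by (auto intro: antisym)

lemma nmul_ge_self: "0 \<le> (x::'a::linordered_ab_group_add) \<Longrightarrow> n \<ge> 1 \<Longrightarrow> x \<le> nmul n x"
proof (induction n)
  case (Suc n)
  then show ?case by (cases n) (simp_all add: add_increasing2 nmul_nonneg)
qed simp

lemma nmul_mono_left: "0 \<le> (x::'a::linordered_ab_group_add) \<Longrightarrow> a \<le> b \<Longrightarrow> nmul a x \<le> nmul b x"
  using nmul_add[of a "b - a" x] nmul_nonneg[of x "b - a"] by simp

lemma nmul_strict_mono_left:
  "0 < (x::'a::linordered_ab_group_add) \<Longrightarrow> a < b \<Longrightarrow> nmul a x < nmul b x"
  using nmul_add[of a "b - a" x] nmul_strict_mono[of 0 x "b - a"] by simp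

lemma zmul_nonpos: "c \<le> 0 \<Longrightarrow> 0 \<le> (x::'a::linordered_ab_group_add) \<Longrightarrow> zmul c x \<le> 0"
  by (cases "c = 0") (auto simp: zmul_def nmul_nonneg)

lemma zmul_le_nmul_abs:
  "zmul k (x::'a::linordered_ab_group_add) \<le> nmul (nat \<bar>k\<bar>) (max x (- x))"
proof (cases "k \<ge> 0")
  case True
  then show ?thesis by (simp add: zmul_def nmul_mono)
next
  case False
  then have "zmul k x = nmul (nat (- k)) (- x)" by (simp add: zmul_def nmul_minus)
  also have "\<dots> \<le> nmul (nat \<bar>k\<bar>) (max x (- x))" using False by (simp add: nmul_mono)
  finally show ?thesis .
qed

section \<open>Division with remainder in a Z-group\<close>

lemma zgroup_pos: "zgroup e \<Longrightarrow> 0 < e"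
  by (simp add: zgroup_def)

lemma zgroup_least_pos: "zgroup e \<Longrightarrow> 0 < x \<Longrightarrow> e \<le> x"
  by (simp add: zgroup_def)

lemma zgroup_nmul_not_multiple:
  fixes e :: "'z::linordered_ab_group_add"
  assumes z: "zgroup e" and k: "0 < k" "k < D"
  shows "nmul k e \<noteq> nmul D q"
proof
  assume eq: "nmul k e = nmul D q"
  have "0 < nmul k e" using nmul_strict_mono_left[OF zgroup_pos[OF z] k(1)] by simp
  then have "\<not> q \<le> 0" using eq nmul_mono[of q 0 D] by auto
  then have "e \<le> q" using zgroup_least_pos[OF z] by simp
  then have "nmul D e \<le> nmul D q" by (rule nmul_mono)
  moreover have "nmul k e < nmul D e" using nmul_strict_mono_left[OF zgroup_pos[OF z] k(2)] .
  ultimately show False using eq by simp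
qed

lemma equiv_nmul_congruence: "equiv UNIV {(x::'a::ab_group_add, y). \<exists>q. x - y = nmul D q}"
proof (rule equivI)
  show "refl {(x::'a, y). \<exists>q. x - y = nmul D q}"
    by (rule refl_onI) (auto intro: exI[of _ 0])
  show "sym {(x::'a, y). \<exists>q. x - y = nmul D q}"
  proof (rule symI)
    fix x y :: 'a assume "(x, y) \<in> {(x, y). \<exists>q. x - y = nmul D q}"
    then obtain q where "x - y = nmul D q" by auto
    then have "y - x = nmul D (- q)" by (simp add: nmul_minus flip: minus_diff_eq[of x y])
    then show "(y, x) \<in> {(x, y). \<exists>q. x - y = nmul D q}" by auto
  qed
  show "trans {(x::'a, y). \<exists>q. x - y = nmul D q}"
  proof (rule transI)
    fix x y u :: 'a
    assume "(x, y) \<in> {(x, y). \<exists>q. x - y = nmul D q}" "(y, u) \<in> {(x, y). \<exists>q. x - y = nmul D q}"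
    then obtain q1 q2 where "x - y = nmul D q1" "y - u = nmul D q2" by auto
    then have "x - u = nmul D (q1 + q2)" by (simp add: nmul_add_right algebra_simps)
    then show "(x, u) \<in> {(x, y). \<exists>q. x - y = nmul D q}" by auto
  qed
qed simp

text \<open>The residues of \<open>0, e, \<dots>, (D - 1) e\<close> modulo \<open>D\<close> are distinct, so by the
  cardinality axiom of a Z-group they exhaust the quotient.\<close>
lemma zgroup_division:
  fixes e :: "'z::linordered_ab_group_add"
  assumes z: "zgroup e" and D: "D \<ge> 1"
  shows "\<exists>q j. j < D \<and> w = nmul D q + nmul j e"
proof -
  define R where "R = {(x::'z, y). \<exists>q. x - y = nmul D q}"
  have eqv: "equiv UNIV R" unfolding R_def by (rule equiv_nmul_congruence)
  have card: "card (UNIV // R) = D" using z D unfolding zgroup_def R_def by blast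
  define h where "h j = R `` {nmul j e}" for j
  have "inj_on h {..<D}"
  proof (rule inj_onI)
    fix i j assume "i \<in> {..<D}" "j \<in> {..<D}" "h i = h j"
    then have i: "i < D" and j: "j < D" and "(nmul i e, nmul j e) \<in> R"
      using eqv unfolding h_def by (simp_all add: equiv_class_eq_iff)
    then obtain q where q: "nmul i e - nmul j e = nmul D q" unfolding R_def by auto
    show "i = j"
    proof (rule linorder_cases[of i j])
      assume "i < j"
      then have "nmul (j - i) e = nmul D (- q)"
        using q by (simp add: nmul_diff nmul_minus flip: minus_diff_eq[of "nmul i e"])
      then show ?thesis using zgroup_nmul_not_multiple[OF z, of "j - i" D] \<open>i < j\<close> j by simp
    next
      assume "j < i"
      then have "nmul (i - j) e = nmul D q" using q by (simp add: nmul_diff)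
      then show ?thesis using zgroup_nmul_not_multiple[OF z, of "i - j" D] \<open>j < i\<close> i by simp
    qed
  qed
  then have "card (h ` {..<D}) = card (UNIV // R)" using card by (simp add: card_image)
  moreover have "h ` {..<D} \<subseteq> UNIV // R" unfolding h_def by (auto intro: quotientI)
  moreover have "finite (UNIV // R)" using card D by (intro card_ge_0_finite) simp
  ultimately have "h ` {..<D} = UNIV // R" by (metis card_subset_eq)
  moreover have "R `` {w} \<in> UNIV // R" by (auto intro: quotientI)
  ultimately obtain j where "j < D" "R `` {w} = h j" by auto
  moreover from this have "(w, nmul j e) \<in> R"
    using eqv unfolding h_def by (simp add: equiv_class_eq_iff)
  then obtain q where "w - nmul j e = nmul D q" unfolding R_def by auto
  then have "w = nmul D q + nmul j e" by (simp add: algebra_simps)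
  with \<open>j < D\<close> show ?thesis by blast
qed

lemma zgroup_division_nonneg:
  fixes e :: "'z::linordered_ab_group_add"
  assumes z: "zgroup e" and D: "D \<ge> 1" and w: "0 \<le> w"
  shows "\<exists>q j. j < D \<and> w = nmul D q + nmul j e \<and> 0 \<le> q"
proof -
  obtain q j where j: "j < D" and wq: "w = nmul D q + nmul j e"
    using zgroup_division[OF z D] by blast
  have "0 \<le> q"
  proof (rule ccontr)
    assume "\<not> 0 \<le> q"
    then have "e \<le> - q" using zgroup_least_pos[OF z, of "- q"] by simp
    then have "nmul D e \<le> nmul D (- q)" by (rule nmul_mono)
    then have "nmul D q \<le> - nmul D e" by (simp add: nmul_minus le_minus_iff)
    moreover have "nmul j e < nmul D e" using nmul_strict_mono_left[OF zgroup_pos[OF z] j] .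
    ultimately have "nmul D q + nmul j e < - nmul D e + nmul D e" by (rule add_le_less_mono)
    then have "w < 0" using wq by simp
    then show False using w by simp
  qed
  then show ?thesis using j wq by blast
qed

section \<open>Linear terms and literals\<close>

text \<open>A linear term \<open>(c, a)\<close> stands for \<open>a + \<Sum>i<N. c i \<cdot> v\<^sub>i\<close>; the number \<open>N\<close> of
  variables is fixed by the caller.\<close>
type_synonym 'z linterm = "(nat \<Rightarrow> int) \<times> 'z"

definition lin_val :: "nat \<Rightarrow> (nat \<Rightarrow> 'z::ab_group_add) \<Rightarrow> 'z linterm \<Rightarrow> 'z" where
  "lin_val N env t = snd t + (\<Sum>i<N. zmul (fst t i) (env i))"

definition lin_add :: "'z::ab_group_add linterm \<Rightarrow> 'z linterm \<Rightarrow> 'z linterm" where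
  "lin_add s t = ((\<lambda>i. fst s i + fst t i), snd s + snd t)"

definition lin_scale :: "int \<Rightarrow> 'z::ab_group_add linterm \<Rightarrow> 'z linterm" where
  "lin_scale k t = ((\<lambda>i. k * fst t i), zmul k (snd t))"

definition lin_const :: "'z::ab_group_add \<Rightarrow> 'z linterm" where
  "lin_const c = ((\<lambda>_. 0), c)"

definition lin_var :: "nat \<Rightarrow> 'z::ab_group_add linterm" where
  "lin_var v = ((\<lambda>i. if i = v then 1 else 0), 0)"

definition lin_drop :: "nat \<Rightarrow> 'z::ab_group_add linterm \<Rightarrow> 'z linterm" where
  "lin_drop v t = ((fst t)(v := 0), snd t)"

definition lin_diff :: "'z::ab_group_add linterm \<Rightarrow> 'z linterm \<Rightarrow> 'z linterm" where
  "lin_diff s t = lin_add s (lin_scale (-1) t)"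

lemma lin_val_add: "lin_val N env (lin_add s t) = lin_val N env s + lin_val N env t"
  by (simp add: lin_val_def lin_add_def zmul_add sum.distrib algebra_simps)

lemma lin_val_scale: "lin_val N env (lin_scale k t) = zmul k (lin_val N env t)"
  by (simp add: lin_val_def lin_scale_def zmul_mult zmul_add_right zmul_sum)

lemma lin_val_const [simp]: "lin_val N env (lin_const c) = c"
  by (simp add: lin_val_def lin_const_def)

lemma lin_val_var: "v < N \<Longrightarrow> lin_val N env (lin_var v) = env v"
proof -
  have "(\<Sum>i<N. zmul (if i = v then 1 else 0) (env i)) = (\<Sum>i<N. if i = v then env i else 0)"
    by (rule sum.cong) auto
  then show "v < N \<Longrightarrow> ?thesis" by (simp add: lin_val_def lin_var_def)
qed

lemma lin_val_diff: "lin_val N env (lin_diff s t) = lin_val N env s - lin_val N env t"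
  by (simp add: lin_diff_def lin_val_add lin_val_scale zmul_uminus)

lemma lin_val_upd:
  assumes "v < N"
  shows "lin_val N (env(v := a)) t = lin_val N env (lin_drop v t) + zmul (fst t v) a"
proof -
  have v: "v \<in> {..<N}" using assms by simp
  have "(\<Sum>i<N. zmul (fst t i) ((env(v := a)) i))
      = zmul (fst t v) a + (\<Sum>i\<in>{..<N} - {v}. zmul (fst t i) (env i))"
    by (simp add: sum.remove[OF _ v])
  moreover have "(\<Sum>i<N. zmul (((fst t)(v := 0)) i) (env i))
      = (\<Sum>i\<in>{..<N} - {v}. zmul (fst t i) (env i))"
    by (simp add: sum.remove[OF _ v])
  ultimately show ?thesis by (simp add: lin_val_def lin_drop_def algebra_simps)
qed

lemma lin_val_upd_irrelevant:
  "v < N \<Longrightarrow> fst t v = 0 \<Longrightarrow> lin_val N (env(v := a)) t = lin_val N (env(v := b)) t"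
  using lin_val_upd[of v N env a t] lin_val_upd[of v N env b t] by simp

datatype 'z lit = Nonpos "'z linterm" | Dvd nat "'z linterm" | NDvd nat "'z linterm"

definition gdvd :: "nat \<Rightarrow> 'z::ab_group_add \<Rightarrow> bool" where
  "gdvd d x \<longleftrightarrow> (\<exists>q. x = nmul d q)"

fun lit_term :: "'z lit \<Rightarrow> 'z linterm" where
  "lit_term (Nonpos t) = t"
| "lit_term (Dvd d t) = t"
| "lit_term (NDvd d t) = t"

fun lit_mod :: "'z lit \<Rightarrow> nat" where
  "lit_mod (Nonpos t) = 1"
| "lit_mod (Dvd d t) = d"
| "lit_mod (NDvd d t) = d"

fun lit_map :: "('z linterm \<Rightarrow> 'z linterm) \<Rightarrow> 'z lit \<Rightarrow> 'z lit" where
  "lit_map f (Nonpos t) = Nonpos (f t)"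
| "lit_map f (Dvd d t) = Dvd d (f t)"
| "lit_map f (NDvd d t) = NDvd d (f t)"

fun lit_test :: "'z::linordered_ab_group_add lit \<Rightarrow> 'z \<Rightarrow> bool" where
  "lit_test (Nonpos t) x \<longleftrightarrow> x \<le> 0"
| "lit_test (Dvd d t) x \<longleftrightarrow> gdvd d x"
| "lit_test (NDvd d t) x \<longleftrightarrow> \<not> gdvd d x"

definition lit_sat :: "nat \<Rightarrow> (nat \<Rightarrow> 'z::linordered_ab_group_add) \<Rightarrow> 'z lit \<Rightarrow> bool" where
  "lit_sat N env L \<longleftrightarrow> lit_test L (lin_val N env (lit_term L))"

definition lit_coeff :: "nat \<Rightarrow> 'z lit \<Rightarrow> int" where
  "lit_coeff v L = fst (lit_term L) v"

definition conj_sat :: "nat \<Rightarrow> (nat \<Rightarrow> 'z::linordered_ab_group_add) \<Rightarrow> 'z lit list \<Rightarrow> bool" where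
  "conj_sat N env C \<longleftrightarrow> (\<forall>L\<in>set C. lit_sat N env L)"

definition dnf_sat :: "nat \<Rightarrow> (nat \<Rightarrow> 'z::linordered_ab_group_add) \<Rightarrow> 'z lit list list \<Rightarrow> bool" where
  "dnf_sat N env F \<longleftrightarrow> (\<exists>C\<in>set F. conj_sat N env C)"

definition wf_conj :: "'z lit list \<Rightarrow> bool" where
  "wf_conj C \<longleftrightarrow> (\<forall>L\<in>set C. lit_mod L \<ge> 1)"

definition wf_dnf :: "'z lit list list \<Rightarrow> bool" where
  "wf_dnf F \<longleftrightarrow> (\<forall>C\<in>set F. wf_conj C)"

lemma lit_mod_lit_map [simp]: "lit_mod (lit_map f L) = lit_mod L"
  by (cases L) auto

lemma lit_term_lit_map [simp]: "lit_term (lit_map f L) = f (lit_term L)"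
  by (cases L) auto

lemma lit_test_lit_map [simp]: "lit_test (lit_map f L) = lit_test L"
  by (cases L) (auto simp: fun_eq_iff)

lemma gdvd_add_multiple: "d dvd D \<Longrightarrow> gdvd d (x + nmul D w) \<longleftrightarrow> gdvd d x"
proof -
  assume "d dvd D"
  then obtain k where "nmul D w = nmul d (nmul k w)" by (auto simp: nmul_mult)
  moreover have "x + nmul d y = nmul d q \<longleftrightarrow> x = nmul d (q - y)" for y q
    by (auto simp: nmul_diff_right algebra_simps)
  ultimately show ?thesis unfolding gdvd_def by (metis add_diff_cancel nmul_add_right)
qed

lemma gdvd_nmul_iff:
  fixes x :: "'z::linordered_ab_group_add"
  assumes "m \<ge> 1"
  shows "gdvd (m * d) (nmul m x) \<longleftrightarrow> gdvd d x"
  unfolding gdvd_def nmul_mult nmul_inj[OF assms] ..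

lemma lit_sat_upd:
  "v < N \<Longrightarrow> lit_sat N (env(v := a)) L
     \<longleftrightarrow> lit_test L (lin_val N env (lin_drop v (lit_term L)) + zmul (lit_coeff v L) a)"
  by (simp add: lit_sat_def lin_val_upd lit_coeff_def)

lemma lit_sat_periodic:
  assumes v: "v < N" and d: "lit_mod L dvd D" and c: "\<And>t. L = Nonpos t \<Longrightarrow> lit_coeff v L = 0"
  shows "lit_sat N (env(v := a + nmul D w)) L \<longleftrightarrow> lit_sat N (env(v := a)) L"
proof (cases L)
  case (Nonpos t)
  then show ?thesis
    using c lin_val_upd_irrelevant[OF v, of t env "a + nmul D w" a] by (simp add: lit_sat_def lit_coeff_def)
next
  case (Dvd d t)
  then show ?thesis using d
    by (simp add: lit_sat_upd[OF v] zmul_add_right zmul_nmul gdvd_add_multiple flip: add.assoc)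
next
  case (NDvd d t)
  then show ?thesis using d
    by (simp add: lit_sat_upd[OF v] zmul_add_right zmul_nmul gdvd_add_multiple flip: add.assoc)
qed

definition lit_subst :: "nat \<Rightarrow> 'z::ab_group_add linterm \<Rightarrow> 'z lit \<Rightarrow> 'z lit" where
  "lit_subst v u = lit_map (\<lambda>t. lin_add (lin_drop v t) (lin_scale (fst t v) u))"

lemma lit_mod_lit_subst [simp]: "lit_mod (lit_subst v u L) = lit_mod L"
  by (simp add: lit_subst_def)

lemma lit_sat_subst:
  "v < N \<Longrightarrow> lit_sat N env (lit_subst v u L) \<longleftrightarrow> lit_sat N (env(v := lin_val N env u)) L"
  by (simp add: lit_subst_def lit_sat_def lin_val_add lin_val_scale lin_val_upd)

lemma conj_sat_subst:
  "v < N \<Longrightarrow> conj_sat N env (map (lit_subst v u) C) \<longleftrightarrow> conj_sat N (env(v := lin_val N env u)) C"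
  by (simp add: conj_sat_def lit_sat_subst)

section \<open>Cooper's quantifier elimination\<close>

definition is_lower :: "nat \<Rightarrow> 'z::ab_group_add lit \<Rightarrow> bool" where
  "is_lower v L \<longleftrightarrow> (\<exists>t. L = Nonpos t) \<and> lit_coeff v L = -1"

definition is_upper :: "nat \<Rightarrow> 'z::ab_group_add lit \<Rightarrow> bool" where
  "is_upper v L \<longleftrightarrow> (\<exists>t. L = Nonpos t) \<and> lit_coeff v L = 1"

lemma lit_sat_lower:
  "v < N \<Longrightarrow> is_lower v L \<Longrightarrow> lit_sat N (env(v := y)) L \<longleftrightarrow> lin_val N env (lin_drop v (lit_term L)) \<le> y"
  by (auto simp: is_lower_def lit_sat_upd zmul_uminus)

lemma lit_sat_upper:
  "v < N \<Longrightarrow> is_upper v L \<Longrightarrow> lit_sat N (env(v := y)) L \<longleftrightarrow> lin_val N env (lin_drop v (lit_term L)) + y \<le> 0"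
  by (auto simp: is_upper_def lit_sat_upd)

lemma lit_mod_dvd_prod: "L \<in> set C \<Longrightarrow> lit_mod L dvd prod_list (map lit_mod C)"
  by (induction C) auto

lemma prod_lit_mod_pos: "wf_conj C \<Longrightarrow> prod_list (map lit_mod C) \<ge> 1"
  unfolding wf_conj_def by (induction C) auto

lemma lit_sat_periodic_unbounded:
  assumes "v < N" "L \<in> set C" "lit_coeff v L \<in> {-1, 0, 1}" "\<not> is_lower v L" "\<not> is_upper v L"
  shows "lit_sat N (env(v := a + nmul (prod_list (map lit_mod C)) w)) L \<longleftrightarrow> lit_sat N (env(v := a)) L"
  using assms by (intro lit_sat_periodic lit_mod_dvd_prod) (auto simp: is_lower_def is_upper_def)

definition absz :: "'z::linordered_ab_group_add \<Rightarrow> 'z" where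
  "absz x = max x (- x)"

lemma absz_nonneg: "0 \<le> absz x"
  by (cases "0 \<le> x") (auto simp: absz_def le_max_iff_disj)

lemma le_absz: "x \<le> absz x"
  by (simp add: absz_def)

text \<open>Cooper's elimination of \<open>\<exists>v\<close>, for coefficients of \<open>v\<close> in \<open>{-1, 0, 1}\<close>: if there
  is no lower bound on \<open>v\<close>, a solution can be pushed down by multiples of the period \<open>D\<close>
  until all upper bounds hold; otherwise some solution exceeds the largest lower bound by
  less than \<open>D e\<close>.\<close>
definition cooper_conj :: "'z::linordered_ab_group_add \<Rightarrow> nat \<Rightarrow> 'z lit list \<Rightarrow> 'z lit list list" where
  "cooper_conj e v C = (let D = prod_list (map lit_mod C);
      ls = map (\<lambda>L. lin_drop v (lit_term L)) (filter (is_lower v) C) in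
    if ls = [] then
      map (\<lambda>j. map (lit_subst v (lin_const (nmul j e))) (filter (\<lambda>L. \<not> is_upper v L) C)) [0..<D]
    else concat (map (\<lambda>s. map (\<lambda>j. map (lit_subst v (lin_add s (lin_const (nmul j e)))) C) [0..<D]) ls))"

lemma conj_sat_below_upper_bounds:
  assumes v: "v < N" and cs: "\<forall>L\<in>set C. lit_coeff v L \<in> {-1, 0, 1}"
    and nolow: "\<forall>L\<in>set C. \<not> is_lower v L" and D: "prod_list (map lit_mod C) \<ge> 1"
    and a: "conj_sat N (env(v := a)) (filter (\<lambda>L. \<not> is_upper v L) C)"
  shows "\<exists>y. conj_sat N (env(v := y)) C"
proof -
  define D where "D = prod_list (map lit_mod C)"
  define Q where
    "Q = absz a + (\<Sum>L\<leftarrow>filter (is_upper v) C. absz (lin_val N env (lin_drop v (lit_term L))))"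
  have "0 \<le> Q" unfolding Q_def by (intro add_nonneg_nonneg sum_list_nonneg) (auto simp: absz_nonneg)
  then have QD: "Q \<le> nmul D Q" using nmul_ge_self D unfolding D_def by blast
  have "lit_sat N (env(v := a + nmul D (- Q))) L" if L: "L \<in> set C" for L
  proof (cases "is_upper v L")
    case False
    then show ?thesis using a L lit_sat_periodic_unbounded[OF v L] cs nolow
      unfolding conj_sat_def D_def by auto
  next
    case True
    define r where "r = lin_val N env (lin_drop v (lit_term L))"
    have "absz r \<le> (\<Sum>L\<leftarrow>filter (is_upper v) C. absz (lin_val N env (lin_drop v (lit_term L))))"
      unfolding r_def using L True by (intro member_le_sum_list) (auto simp: absz_nonneg)
    moreover have "r + a \<le> absz a + absz r"
      using add_mono[OF le_absz[of r] le_absz[of a]] by (simp add: add.commute)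
    ultimately have "r + a \<le> Q" unfolding Q_def by (meson add_left_mono order_trans)
    then show ?thesis using QD True by (simp add: lit_sat_upper[OF v] r_def nmul_minus algebra_simps)
  qed
  then show ?thesis unfolding conj_sat_def by blast
qed

lemma cooper_no_lower:
  fixes e :: "'z::linordered_ab_group_add"
  assumes z: "zgroup e" and v: "v < N" and wf: "wf_conj C"
    and cs: "\<forall>L\<in>set C. lit_coeff v L \<in> {-1, 0, 1}" and nolow: "\<forall>L\<in>set C. \<not> is_lower v L"
  defines "D \<equiv> prod_list (map lit_mod C)"
  shows "(\<exists>j<D. conj_sat N (env(v := nmul j e)) (filter (\<lambda>L. \<not> is_upper v L) C))
    \<longleftrightarrow> (\<exists>y. conj_sat N (env(v := y)) C)"
proof
  assume "\<exists>y. conj_sat N (env(v := y)) C"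
  then obtain y where y: "conj_sat N (env(v := y)) C" by blast
  obtain q j where "j < D" and yq: "y = nmul j e + nmul D q"
    using zgroup_division[OF z prod_lit_mod_pos[OF wf]] unfolding D_def by (metis add.commute)
  moreover have "lit_sat N (env(v := nmul j e)) L" if L: "L \<in> set C" "\<not> is_upper v L" for L
    using y L lit_sat_periodic_unbounded[OF v L(1) cs[rule_format, OF L(1)]
        nolow[rule_format, OF L(1)] L(2)]
    unfolding conj_sat_def yq D_def by blast
  then have "conj_sat N (env(v := nmul j e)) (filter (\<lambda>L. \<not> is_upper v L) C)"
    by (simp add: conj_sat_def)
  ultimately show "\<exists>j<D. conj_sat N (env(v := nmul j e)) (filter (\<lambda>L. \<not> is_upper v L) C)"
    by blast
qed (use conj_sat_below_upper_bounds[OF v cs nolow prod_lit_mod_pos[OF wf]] in blast)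

lemma conj_sat_shift_down:
  assumes v: "v < N" and cs: "\<forall>L\<in>set C. lit_coeff v L \<in> {-1, 0, 1}"
    and y: "conj_sat N (env(v := y + nmul (prod_list (map lit_mod C)) q)) C" and q: "0 \<le> q"
    and low: "\<And>L. L \<in> set C \<Longrightarrow> is_lower v L \<Longrightarrow> lin_val N env (lin_drop v (lit_term L)) \<le> y"
  shows "conj_sat N (env(v := y)) C"
  unfolding conj_sat_def
proof
  fix L assume L: "L \<in> set C"
  consider "is_upper v L" | "is_lower v L" | "\<not> is_upper v L" "\<not> is_lower v L" by blast
  then show "lit_sat N (env(v := y)) L"
  proof cases
    case 1
    define r where "r = lin_val N env (lin_drop v (lit_term L))"
    have "r + (y + nmul (prod_list (map lit_mod C)) q) \<le> 0"
      using y L lit_sat_upper[OF v 1] unfolding conj_sat_def r_def by blast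
    moreover have "r + y \<le> r + (y + nmul (prod_list (map lit_mod C)) q)"
      using nmul_nonneg[OF q] by simp
    ultimately have "r + y \<le> 0" by (rule order_trans[rotated])
    then show ?thesis unfolding r_def using lit_sat_upper[OF v 1] by simp
  next
    case 2
    then show ?thesis using low[OF L 2] lit_sat_lower[OF v 2] by simp
  next
    case 3
    then show ?thesis using y L lit_sat_periodic_unbounded[OF v L] cs unfolding conj_sat_def by auto
  qed
qed

lemma cooper_lower:
  fixes e :: "'z::linordered_ab_group_add"
  assumes z: "zgroup e" and v: "v < N" and wf: "wf_conj C"
    and cs: "\<forall>L\<in>set C. lit_coeff v L \<in> {-1, 0, 1}"
  defines "D \<equiv> prod_list (map lit_mod C)"
    and "ls \<equiv> map (\<lambda>L. lin_drop v (lit_term L)) (filter (is_lower v) C)"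
  assumes ls: "ls \<noteq> []"
  shows "(\<exists>s\<in>set ls. \<exists>j<D. conj_sat N (env(v := lin_val N env s + nmul j e)) C)
    \<longleftrightarrow> (\<exists>y. conj_sat N (env(v := y)) C)"
proof
  assume "\<exists>y. conj_sat N (env(v := y)) C"
  then obtain y where y: "conj_sat N (env(v := y)) C" by blast
  define M where "M = Max (lin_val N env ` set ls)"
  have "M \<in> lin_val N env ` set ls" unfolding M_def using ls by (intro Max_in) auto
  then obtain s0 where s0: "s0 \<in> set ls" "lin_val N env s0 = M" by auto
  have low: "lin_val N env (lin_drop v (lit_term L)) \<le> M" if "L \<in> set C" "is_lower v L" for L
    unfolding M_def ls_def using that by (intro Max_ge) auto
  have "M \<le> y"
  proof -
    obtain L where L: "L \<in> set C" "is_lower v L" "s0 = lin_drop v (lit_term L)"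
      using s0(1) unfolding ls_def by auto
    then have "lit_sat N (env(v := y)) L" using y unfolding conj_sat_def by blast
    then show ?thesis using L s0(2) lit_sat_lower[OF v L(2)] by simp
  qed
  then obtain q j where j: "j < D" and yq: "y - M = nmul D q + nmul j e" and q: "0 \<le> q"
    using zgroup_division_nonneg[OF z prod_lit_mod_pos[OF wf], of "y - M"] unfolding D_def by auto
  have "y = (M + nmul j e) + nmul D q" using yq by (simp add: algebra_simps)
  then have y': "conj_sat N (env(v := (M + nmul j e) + nmul D q)) C" using y by simp
  have "M \<le> M + nmul j e" using nmul_nonneg[of e j] zgroup_pos[OF z] by simp
  then have "lin_val N env (lin_drop v (lit_term L)) \<le> M + nmul j e"
    if "L \<in> set C" "is_lower v L" for L
    using low[OF that] by (rule order_trans[rotated])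
  then have "conj_sat N (env(v := M + nmul j e)) C"
    using conj_sat_shift_down[OF v cs y'[unfolded D_def] q] by blast
  with s0 j show "\<exists>s\<in>set ls. \<exists>j<D. conj_sat N (env(v := lin_val N env s + nmul j e)) C"
    by blast
qed auto

lemma cooper_conj_correct:
  fixes e :: "'z::linordered_ab_group_add"
  assumes z: "zgroup e" and v: "v < N" and wf: "wf_conj C"
    and cs: "\<forall>L\<in>set C. lit_coeff v L \<in> {-1, 0, 1}"
  shows "dnf_sat N env (cooper_conj e v C) \<longleftrightarrow> (\<exists>y. conj_sat N (env(v := y)) C)"
proof (cases "filter (is_lower v) C = []")
  case True
  have "cooper_conj e v C = map (\<lambda>j. map (lit_subst v (lin_const (nmul j e)))
      (filter (\<lambda>L. \<not> is_upper v L) C)) [0..<prod_list (map lit_mod C)]"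
    using True by (simp add: cooper_conj_def)
  then have "dnf_sat N env (cooper_conj e v C) \<longleftrightarrow> (\<exists>j<prod_list (map lit_mod C).
      conj_sat N (env(v := nmul j e)) (filter (\<lambda>L. \<not> is_upper v L) C))"
    by (auto simp: dnf_sat_def conj_sat_subst[OF v])
  also have "\<dots> \<longleftrightarrow> (\<exists>y. conj_sat N (env(v := y)) C)"
    using True by (intro cooper_no_lower[OF z v wf cs]) (simp add: filter_empty_conv)
  finally show ?thesis .
next
  case False
  define ls where "ls = map (\<lambda>L. lin_drop v (lit_term L)) (filter (is_lower v) C)"
  have "cooper_conj e v C = concat (map (\<lambda>s. map (\<lambda>j. map (lit_subst v (lin_add s (lin_const (nmul j e)))) C)
      [0..<prod_list (map lit_mod C)]) ls)"
    using False by (simp add: cooper_conj_def ls_def)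
  then have "dnf_sat N env (cooper_conj e v C) \<longleftrightarrow> (\<exists>s\<in>set ls. \<exists>j<prod_list (map lit_mod C).
      conj_sat N (env(v := lin_val N env s + nmul j e)) C)"
    by (auto simp: dnf_sat_def conj_sat_subst[OF v] lin_val_add) force+
  also have "\<dots> \<longleftrightarrow> (\<exists>y. conj_sat N (env(v := y)) C)"
    using False unfolding ls_def by (intro cooper_lower[OF z v wf cs]) simp
  finally show ?thesis .
qed

lemma cooper_conj_wf: "wf_conj C \<Longrightarrow> wf_dnf (cooper_conj e v C)"
  unfolding cooper_conj_def Let_def wf_dnf_def wf_conj_def by auto

fun lit_scale :: "nat \<Rightarrow> 'z::ab_group_add lit \<Rightarrow> 'z lit" where
  "lit_scale m (Nonpos t) = Nonpos (lin_scale (int m) t)"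
| "lit_scale m (Dvd d t) = Dvd (m * d) (lin_scale (int m) t)"
| "lit_scale m (NDvd d t) = NDvd (m * d) (lin_scale (int m) t)"

lemma lit_term_lit_scale: "lit_term (lit_scale m L) = lin_scale (int m) (lit_term L)"
  by (cases L) auto

lemma lit_mod_lit_scale: "m \<ge> 1 \<Longrightarrow> lit_mod L \<ge> 1 \<Longrightarrow> lit_mod (lit_scale m L) \<ge> 1"
  by (cases L) auto

lemma lit_test_lit_scale:
  fixes x :: "'z::linordered_ab_group_add"
  assumes "m \<ge> 1"
  shows "lit_test (lit_scale m L) (nmul m x) \<longleftrightarrow> lit_test L x"
  using nmul_le_iff[OF assms, of x 0] gdvd_nmul_iff[OF assms] by (cases L) auto

definition coeff_prod :: "nat \<Rightarrow> 'z::ab_group_add lit list \<Rightarrow> nat" where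
  "coeff_prod v C = (\<Prod>L\<in>{L \<in> set C. lit_coeff v L \<noteq> 0}. nat \<bar>lit_coeff v L\<bar>)"

lemma coeff_prod_pos: "coeff_prod v C \<ge> 1"
proof -
  have "0 < coeff_prod v C" unfolding coeff_prod_def by (rule prod_pos) auto
  then show ?thesis by simp
qed

lemma coeff_dvd_coeff_prod:
  "L \<in> set C \<Longrightarrow> lit_coeff v L \<noteq> 0 \<Longrightarrow> nat \<bar>lit_coeff v L\<bar> dvd coeff_prod v C"
  unfolding coeff_prod_def by (rule dvd_prodI) auto

text \<open>Multiplying a literal by \<open>l / |c|\<close>, where \<open>c\<close> is its coefficient of \<open>v\<close>, makes that
  coefficient \<open>\<plusminus>l\<close>; the term \<open>l \<cdot> v\<close> is then renamed to \<open>v\<close>.\<close>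
definition unit_lit :: "nat \<Rightarrow> nat \<Rightarrow> 'z::ab_group_add lit \<Rightarrow> 'z lit" where
  "unit_lit v l L = (if lit_coeff v L = 0 then L
     else lit_map (\<lambda>t. ((fst t)(v := sgn (lit_coeff v L)), snd t))
            (lit_scale (l div nat \<bar>lit_coeff v L\<bar>) L))"

definition unit_coeff_conj :: "nat \<Rightarrow> 'z::ab_group_add lit list \<Rightarrow> 'z lit list" where
  "unit_coeff_conj v C = Dvd (coeff_prod v C) (lin_var v) # map (unit_lit v (coeff_prod v C)) C"

lemma unit_lit_sat:
  fixes z :: "'z::linordered_ab_group_add"
  assumes v: "v < N" and L: "L \<in> set C"
  defines "l \<equiv> coeff_prod v C"
  shows "lit_sat N (env(v := nmul l z)) (unit_lit v l L) \<longleftrightarrow> lit_sat N (env(v := z)) L"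
proof (cases "lit_coeff v L = 0")
  case True
  then show ?thesis unfolding unit_lit_def
    using lin_val_upd_irrelevant[OF v, of "lit_term L" env "nmul l z" z]
    by (simp add: lit_sat_def lit_coeff_def)
next
  case False
  define c where "c = lit_coeff v L"
  define m where "m = l div nat \<bar>c\<bar>"
  have ml: "m * nat \<bar>c\<bar> = l"
    unfolding m_def c_def l_def using coeff_dvd_coeff_prod[OF L False] by simp
  then have m1: "m \<ge> 1" using coeff_prod_pos[of v C] unfolding l_def by (cases m) auto
  have mc: "int m * c = sgn c * int l"
    using ml False unfolding c_def
    by (metis abs_ge_zero int_nat_eq mult.assoc mult.commute mult_sgn_abs of_nat_mult)
  define t where "t = lit_term L"
  define r where "r = lin_val N env (lin_drop v t)"
  have "lit_term (unit_lit v l L) = ((fst (lin_scale (int m) t))(v := sgn c), snd (lin_scale (int m) t))"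
    using False unfolding unit_lit_def c_def m_def t_def by (simp add: lit_term_lit_scale)
  moreover have "lin_drop v ((fst (lin_scale (int m) t))(v := sgn c), snd (lin_scale (int m) t))
      = lin_scale (int m) (lin_drop v t)"
    by (simp add: lin_drop_def lin_scale_def fun_eq_iff)
  ultimately have "lin_val N (env(v := nmul l z)) (lit_term (unit_lit v l L))
      = zmul (int m) r + zmul (sgn c) (nmul l z)"
    by (simp add: lin_val_upd[OF v] lin_val_scale r_def)
  also have "zmul (sgn c) (nmul l z) = nmul m (zmul c z)"
    by (metis mc zmul_mult zmul_of_nat)
  also have "zmul (int m) r + nmul m (zmul c z) = nmul m (lin_val N (env(v := z)) t)"
    by (simp add: lin_val_upd[OF v] r_def c_def t_def lit_coeff_def nmul_add_right)
  finally have "lin_val N (env(v := nmul l z)) (lit_term (unit_lit v l L))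
      = nmul m (lin_val N (env(v := z)) (lit_term L))" unfolding t_def .
  moreover have "lit_test (unit_lit v l L) = lit_test (lit_scale m L)"
    using False unfolding unit_lit_def m_def c_def by simp
  ultimately show ?thesis using lit_test_lit_scale[OF m1] by (simp add: lit_sat_def)
qed

lemma unit_coeff_conj_correct:
  fixes env :: "nat \<Rightarrow> 'z::linordered_ab_group_add"
  assumes v: "v < N"
  shows "(\<exists>y. conj_sat N (env(v := y)) (unit_coeff_conj v C)) \<longleftrightarrow> (\<exists>z. conj_sat N (env(v := z)) C)"
proof
  assume "\<exists>y. conj_sat N (env(v := y)) (unit_coeff_conj v C)"
  then obtain y where y: "conj_sat N (env(v := y)) (unit_coeff_conj v C)" by blast
  then obtain q where "y = nmul (coeff_prod v C) q"
    unfolding unit_coeff_conj_def conj_sat_def by (auto simp: lit_sat_def lin_val_var[OF v] gdvd_def)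
  then have "conj_sat N (env(v := q)) C"
    using y unit_lit_sat[OF v _, where C = C and env = env and z = q] unfolding unit_coeff_conj_def conj_sat_def by auto
  then show "\<exists>z. conj_sat N (env(v := z)) C" by blast
next
  assume "\<exists>z. conj_sat N (env(v := z)) C"
  then obtain z where "conj_sat N (env(v := z)) C" by blast
  then have "conj_sat N (env(v := nmul (coeff_prod v C) z)) (unit_coeff_conj v C)"
    using unit_lit_sat[OF v _, where C = C and env = env and z = z]
    unfolding unit_coeff_conj_def conj_sat_def by (auto simp: lit_sat_def lin_val_var[OF v] gdvd_def)
  then show "\<exists>y. conj_sat N (env(v := y)) (unit_coeff_conj v C)" by blast
qed

lemma unit_coeff_conj_wf: "wf_conj C \<Longrightarrow> wf_conj (unit_coeff_conj v C)"
proof -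
  have "lit_mod (unit_lit v (coeff_prod v C) L) \<ge> 1" if "L \<in> set C" "lit_mod L \<ge> 1" for L
  proof (cases "lit_coeff v L = 0")
    case False
    have "coeff_prod v C div nat \<bar>lit_coeff v L\<bar> * nat \<bar>lit_coeff v L\<bar> = coeff_prod v C"
      using coeff_dvd_coeff_prod[OF that(1) False] by simp
    then have "coeff_prod v C div nat \<bar>lit_coeff v L\<bar> \<ge> 1"
      using coeff_prod_pos[of v C] by (cases "coeff_prod v C div nat \<bar>lit_coeff v L\<bar>") auto
    then show ?thesis using that(2) False lit_mod_lit_scale by (simp add: unit_lit_def)
  qed (use that in \<open>simp add: unit_lit_def\<close>)
  then show "wf_conj C \<Longrightarrow> ?thesis"
    unfolding wf_conj_def unit_coeff_conj_def using coeff_prod_pos by auto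
qed

lemma unit_coeff_conj_coeffs: "\<forall>L\<in>set (unit_coeff_conj v C). lit_coeff v L \<in> {-1, 0, 1}"
  unfolding unit_coeff_conj_def unit_lit_def
  by (auto simp: lit_coeff_def lin_var_def sgn_if split: if_splits)

definition elim_dnf :: "'z::linordered_ab_group_add \<Rightarrow> nat \<Rightarrow> 'z lit list list \<Rightarrow> 'z lit list list" where
  "elim_dnf e v F = concat (map (\<lambda>C. cooper_conj e v (unit_coeff_conj v C)) F)"

lemma elim_dnf_correct:
  fixes e :: "'z::linordered_ab_group_add"
  assumes z: "zgroup e" and v: "v < N" and wf: "wf_dnf F"
  shows "dnf_sat N env (elim_dnf e v F) \<longleftrightarrow> (\<exists>y. dnf_sat N (env(v := y)) F)"
proof -
  have "dnf_sat N env (cooper_conj e v (unit_coeff_conj v C)) \<longleftrightarrow> (\<exists>y. conj_sat N (env(v := y)) C)"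
    if "C \<in> set F" for C
    using cooper_conj_correct[OF z v unit_coeff_conj_wf unit_coeff_conj_coeffs]
      unit_coeff_conj_correct[OF v] wf that unfolding wf_dnf_def by blast
  then show ?thesis unfolding elim_dnf_def dnf_sat_def by auto
qed

lemma elim_dnf_wf: "wf_dnf F \<Longrightarrow> wf_dnf (elim_dnf e v F)"
  using cooper_conj_wf unit_coeff_conj_wf unfolding elim_dnf_def wf_dnf_def by fastforce

text \<open>In a Z-group \<open>\<not> t \<le> 0\<close> is \<open>e - t \<le> 0\<close>, so negation stays within the literals.\<close>
fun lit_neg :: "'z::ab_group_add \<Rightarrow> 'z lit \<Rightarrow> 'z lit" where
  "lit_neg e (Nonpos t) = Nonpos (lin_diff (lin_const e) t)"
| "lit_neg e (Dvd d t) = NDvd d t"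
| "lit_neg e (NDvd d t) = Dvd d t"

lemma lit_sat_lit_neg:
  fixes e :: "'z::linordered_ab_group_add"
  assumes z: "zgroup e"
  shows "lit_sat N env (lit_neg e L) \<longleftrightarrow> \<not> lit_sat N env L"
proof (cases L)
  case (Nonpos t)
  have "e - x \<le> 0 \<longleftrightarrow> \<not> x \<le> 0" for x :: 'z
    using zgroup_pos[OF z] zgroup_least_pos[OF z, of x] by auto
  then show ?thesis using Nonpos by (simp add: lit_sat_def lin_val_diff)
qed (auto simp: lit_sat_def)

lemma lit_mod_lit_neg [simp]: "lit_mod (lit_neg e L) = lit_mod L"
  by (cases L) auto

definition dnf_conj :: "'z lit list list \<Rightarrow> 'z lit list list \<Rightarrow> 'z lit list list" where
  "dnf_conj F G = concat (map (\<lambda>C. map (\<lambda>D. C @ D) G) F)"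

lemma dnf_sat_dnf_conj: "dnf_sat N env (dnf_conj F G) \<longleftrightarrow> dnf_sat N env F \<and> dnf_sat N env G"
  unfolding dnf_conj_def dnf_sat_def conj_sat_def by auto

lemma dnf_conj_wf: "wf_dnf F \<Longrightarrow> wf_dnf G \<Longrightarrow> wf_dnf (dnf_conj F G)"
  unfolding dnf_conj_def wf_dnf_def wf_conj_def by auto

fun dnf_neg :: "'z::ab_group_add \<Rightarrow> 'z lit list list \<Rightarrow> 'z lit list list" where
  "dnf_neg e [] = [[]]"
| "dnf_neg e (C # F) = dnf_conj (map (\<lambda>L. [lit_neg e L]) C) (dnf_neg e F)"

lemma dnf_sat_dnf_neg:
  fixes e :: "'z::linordered_ab_group_add"
  assumes z: "zgroup e"
  shows "dnf_sat N env (dnf_neg e F) \<longleftrightarrow> \<not> dnf_sat N env F"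
proof (induction F)
  case (Cons C F)
  have "dnf_sat N env (map (\<lambda>L. [lit_neg e L]) C) \<longleftrightarrow> \<not> conj_sat N env C"
    unfolding dnf_sat_def conj_sat_def using lit_sat_lit_neg[OF z] by auto
  then show ?case using Cons by (simp add: dnf_sat_dnf_conj) (simp add: dnf_sat_def)
qed (simp add: dnf_sat_def conj_sat_def)

lemma dnf_neg_wf: "wf_dnf F \<Longrightarrow> wf_dnf (dnf_neg e F)"
proof (induction F)
  case (Cons C F)
  have "wf_dnf (map (\<lambda>L. [lit_neg e L]) C)" "wf_dnf F"
    using Cons.prems by (auto simp: wf_dnf_def wf_conj_def)
  then show ?case using Cons.IH by (simp add: dnf_conj_wf)
qed (simp add: wf_dnf_def wf_conj_def)

primrec term_vars :: "'z pterm \<Rightarrow> nat set" where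
  "term_vars (PVar i) = {i}"
| "term_vars (PPar c) = {}"
| "term_vars PZero = {}"
| "term_vars POne = {}"
| "term_vars (PPlus s t) = term_vars s \<union> term_vars t"

primrec form_vars :: "'z pform \<Rightarrow> nat set" where
  "form_vars (PEq s t) = term_vars s \<union> term_vars t"
| "form_vars (PLe s t) = term_vars s \<union> term_vars t"
| "form_vars (PCong n s t) = term_vars s \<union> term_vars t"
| "form_vars (PNeg \<phi>) = form_vars \<phi>"
| "form_vars (PConj \<phi> \<psi>) = form_vars \<phi> \<union> form_vars \<psi>"
| "form_vars (PEx i \<phi>) = insert i (form_vars \<phi>)"

lemma finite_term_vars: "finite (term_vars t)"
  by (induction t) auto

lemma finite_form_vars: "finite (form_vars \<phi>)"
  by (induction \<phi>) (auto simp: finite_term_vars)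

primrec lin_of_pterm :: "'z::ab_group_add \<Rightarrow> 'z pterm \<Rightarrow> 'z linterm" where
  "lin_of_pterm e (PVar i) = lin_var i"
| "lin_of_pterm e (PPar c) = lin_const c"
| "lin_of_pterm e PZero = lin_const 0"
| "lin_of_pterm e POne = lin_const e"
| "lin_of_pterm e (PPlus s t) = lin_add (lin_of_pterm e s) (lin_of_pterm e t)"

lemma lin_val_lin_of_pterm:
  "term_vars t \<subseteq> {..<N} \<Longrightarrow> lin_val N env (lin_of_pterm e t) = tval e env t"
  by (induction t) (auto simp: lin_val_var lin_val_add)

definition pterm_diff :: "'z::ab_group_add \<Rightarrow> 'z pterm \<Rightarrow> 'z pterm \<Rightarrow> 'z linterm" where
  "pterm_diff e s t = lin_diff (lin_of_pterm e s) (lin_of_pterm e t)"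

lemma lit_sat_Nonpos_pterm_diff:
  "term_vars s \<union> term_vars t \<subseteq> {..<N} \<Longrightarrow>
    lit_sat N env (Nonpos (pterm_diff e s t)) \<longleftrightarrow> tval e env s \<le> tval e env t"
  by (simp add: pterm_diff_def lit_sat_def lin_val_diff lin_val_lin_of_pterm)

lemma lit_sat_Dvd_pterm_diff:
  "term_vars s \<union> term_vars t \<subseteq> {..<N} \<Longrightarrow>
    lit_sat N env (Dvd n (pterm_diff e s t)) \<longleftrightarrow> (\<exists>q. tval e env s - tval e env t = nmul n q)"
  by (simp add: pterm_diff_def lit_sat_def lin_val_diff lin_val_lin_of_pterm gdvd_def)

theorem presburger_qe:
  fixes e :: "'z::linordered_ab_group_add"
  assumes z: "zgroup e"
  shows "form_vars \<phi> \<subseteq> {..<N} \<Longrightarrow> \<exists>F. wf_dnf F \<and> (\<forall>env. psat e env \<phi> \<longleftrightarrow> dnf_sat N env F)"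
proof (induction \<phi>)
  case (PEq s t)
  then show ?case
    using lit_sat_Nonpos_pterm_diff[of s t N] lit_sat_Nonpos_pterm_diff[of t s N]
    by (intro exI[of _ "[[Nonpos (pterm_diff e s t), Nonpos (pterm_diff e t s)]]"])
      (auto simp: wf_dnf_def wf_conj_def dnf_sat_def conj_sat_def intro: antisym)
next
  case (PLe s t)
  then show ?case using lit_sat_Nonpos_pterm_diff[of s t N]
    by (intro exI[of _ "[[Nonpos (pterm_diff e s t)]]"])
      (auto simp: wf_dnf_def wf_conj_def dnf_sat_def conj_sat_def)
next
  case (PCong n s t)
  show ?case
  proof (cases "n = 0")
    case True
    then show ?thesis
      using PCong lit_sat_Nonpos_pterm_diff[of s t N] lit_sat_Nonpos_pterm_diff[of t s N]
      by (intro exI[of _ "[[Nonpos (pterm_diff e s t), Nonpos (pterm_diff e t s)]]"])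
        (auto simp: wf_dnf_def wf_conj_def dnf_sat_def conj_sat_def intro: antisym)
  next
    case False
    then show ?thesis using PCong lit_sat_Dvd_pterm_diff[of s t N]
      by (intro exI[of _ "[[Dvd n (pterm_diff e s t)]]"])
        (auto simp: wf_dnf_def wf_conj_def dnf_sat_def conj_sat_def)
  qed
next
  case (PNeg \<phi>)
  then obtain F where "wf_dnf F" "\<forall>env. psat e env \<phi> \<longleftrightarrow> dnf_sat N env F" by auto
  then show ?case using dnf_neg_wf dnf_sat_dnf_neg[OF z] by (intro exI[of _ "dnf_neg e F"]) auto
next
  case (PConj \<phi> \<psi>)
  then obtain F G where "wf_dnf F" "\<forall>env. psat e env \<phi> \<longleftrightarrow> dnf_sat N env F"
    and "wf_dnf G" "\<forall>env. psat e env \<psi> \<longleftrightarrow> dnf_sat N env G" by auto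
  then show ?case by (intro exI[of _ "dnf_conj F G"]) (simp add: dnf_conj_wf dnf_sat_dnf_conj)
next
  case (PEx i \<phi>)
  then have i: "i < N" by auto
  obtain F where "wf_dnf F" "\<forall>env. psat e env \<phi> \<longleftrightarrow> dnf_sat N env F" using PEx by auto
  then show ?case using elim_dnf_wf elim_dnf_correct[OF z i] by (intro exI[of _ "elim_dnf e i F"]) auto
qed

section \<open>Uniquely defined values are affinely bounded\<close>

lemma neg_lin_val_drop_le:
  fixes env :: "nat \<Rightarrow> 'z::linordered_ab_group_add"
  assumes env: "\<And>i. i \<noteq> v \<Longrightarrow> 0 \<le> env i \<and> env i \<le> S" and S: "0 \<le> S"
  shows "- lin_val N env (lin_drop v t) \<le> absz (snd t) + nmul (\<Sum>i<N. nat \<bar>fst t i\<bar>) S"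
proof -
  have "- zmul (((fst t)(v := 0)) i) (env i) \<le> nmul (nat \<bar>fst t i\<bar>) S" for i
  proof (cases "i = v")
    case False
    then have "max (env i) (- env i) = env i" using env[of i] by (auto simp: max_def)
    then have "zmul (- fst t i) (env i) \<le> nmul (nat \<bar>fst t i\<bar>) (env i)"
      using zmul_le_nmul_abs[of "- fst t i" "env i"] by simp
    also have "\<dots> \<le> nmul (nat \<bar>fst t i\<bar>) S" using env[OF False] by (simp add: nmul_mono)
    finally show ?thesis using False by (simp add: zmul_uminus)
  qed (simp add: nmul_nonneg[OF S])
  then have "(\<Sum>i<N. - zmul (((fst t)(v := 0)) i) (env i)) \<le> (\<Sum>i<N. nmul (nat \<bar>fst t i\<bar>) S)"
    by (rule sum_mono)
  also have "\<dots> = nmul (\<Sum>i<N. nat \<bar>fst t i\<bar>) S"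
    by (induction N) (simp_all add: nmul_add)
  finally have "- snd t + (\<Sum>i<N. - zmul (((fst t)(v := 0)) i) (env i))
      \<le> absz (snd t) + nmul (\<Sum>i<N. nat \<bar>fst t i\<bar>) S"
    by (rule add_mono[rotated]) (simp add: absz_def)
  then show ?thesis by (simp add: lin_val_def lin_drop_def sum_negf)
qed

lemma nonpos_positive_coeff_bound:
  fixes env :: "nat \<Rightarrow> 'z::linordered_ab_group_add"
  assumes v: "v < N" and env: "\<And>i. i \<noteq> v \<Longrightarrow> 0 \<le> env i \<and> env i \<le> S" and S: "0 \<le> S"
    and t: "lin_val N (env(v := z)) t \<le> 0" and pos: "fst t v > 0"
  shows "z \<le> absz (snd t) + nmul (\<Sum>i<N. nat \<bar>fst t i\<bar>) S"
proof (cases "z \<le> 0")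
  case True
  then show ?thesis using absz_nonneg[of "snd t"] nmul_nonneg[OF S] by (meson add_nonneg_nonneg order_trans)
next
  case False
  then have "z \<le> nmul (nat (fst t v)) z" using nmul_ge_self[of z] pos by simp
  also have "\<dots> = zmul (fst t v) z" using pos by (simp add: zmul_def)
  also have "\<dots> \<le> - lin_val N env (lin_drop v t)" using t lin_val_upd[OF v, of env z t]
    by (simp add: le_diff_eq[of _ 0, symmetric]) (metis le_minus_iff)
  also have "\<dots> \<le> absz (snd t) + nmul (\<Sum>i<N. nat \<bar>fst t i\<bar>) S" by (rule neg_lin_val_drop_le[OF env S])
  finally show ?thesis .
qed

lemma conj_sat_shift_up:
  fixes w :: "'z::linordered_ab_group_add"
  assumes v: "v < N" and C: "conj_sat N (env(v := z)) C" and w: "0 \<le> w"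
    and nonpos: "\<And>t. Nonpos t \<in> set C \<Longrightarrow> fst t v \<le> 0"
  shows "conj_sat N (env(v := z + nmul (prod_list (map lit_mod C)) w)) C"
  unfolding conj_sat_def
proof
  fix L assume L: "L \<in> set C"
  show "lit_sat N (env(v := z + nmul (prod_list (map lit_mod C)) w)) L"
  proof (cases L)
    case (Nonpos t)
    have "zmul (fst t v) (nmul (prod_list (map lit_mod C)) w) \<le> 0"
      using zmul_nonpos[OF nonpos nmul_nonneg[OF w]] L Nonpos by simp
    moreover have "lin_val N (env(v := z)) t \<le> 0"
      using C L Nonpos by (auto simp: conj_sat_def lit_sat_def)
    ultimately show ?thesis using add_nonpos_nonpos
      by (fastforce simp: Nonpos lit_sat_def lin_val_upd[OF v] zmul_add_right add.assoc)
  next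
    case (Dvd d t)
    then show ?thesis using C L lit_sat_periodic[OF v lit_mod_dvd_prod[OF L]] unfolding conj_sat_def
      by blast
  next
    case (NDvd d t)
    then show ?thesis using C L lit_sat_periodic[OF v lit_mod_dvd_prod[OF L]] unfolding conj_sat_def
      by blast
  qed
qed

definition dnf_const_size :: "'z::linordered_ab_group_add lit list list \<Rightarrow> 'z" where
  "dnf_const_size F = (\<Sum>L\<leftarrow>concat F. absz (snd (lit_term L)))"

definition dnf_coeff_size :: "nat \<Rightarrow> 'z::ab_group_add lit list list \<Rightarrow> nat" where
  "dnf_coeff_size N F = (\<Sum>L\<leftarrow>concat F. \<Sum>i<N. nat \<bar>fst (lit_term L) i\<bar>)"

lemma dnf_const_size_nonneg: "0 \<le> dnf_const_size F"
  unfolding dnf_const_size_def by (rule sum_list_nonneg) (auto simp: absz_nonneg)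

text \<open>If a DNF has exactly one solution \<open>z\<close> in the variable \<open>v\<close>, then some literal of the
  satisfied clause bounds \<open>v\<close> from above: otherwise \<open>z\<close> plus a period would be a second
  solution.\<close>
lemma dnf_unique_solution_bound:
  fixes e :: "'z::linordered_ab_group_add" and env :: "nat \<Rightarrow> 'z"
  assumes z: "zgroup e" and v: "v < N" and wf: "wf_dnf F"
    and env: "\<And>i. i \<noteq> v \<Longrightarrow> 0 \<le> env i \<and> env i \<le> S" and S: "0 \<le> S"
    and sol: "\<And>z'. dnf_sat N (env(v := z')) F \<longleftrightarrow> z' = z"
  shows "z \<le> dnf_const_size F + nmul (dnf_coeff_size N F) S"
proof -
  obtain C where C: "C \<in> set F" "conj_sat N (env(v := z)) C"
    using sol[of z] unfolding dnf_sat_def by blast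
  show ?thesis
  proof (cases "\<exists>t. Nonpos t \<in> set C \<and> fst t v > 0")
    case True
    then obtain t where t: "Nonpos t \<in> set C" "fst t v > 0" by blast
    then have "Nonpos t \<in> set (concat F)" using C(1) by auto
    then have "absz (snd t) \<le> dnf_const_size F" "(\<Sum>i<N. nat \<bar>fst t i\<bar>) \<le> dnf_coeff_size N F"
      unfolding dnf_const_size_def dnf_coeff_size_def
      by (force intro: member_le_sum_list simp: absz_nonneg)+
    moreover have "lin_val N (env(v := z)) t \<le> 0"
      using C(2) t(1) unfolding conj_sat_def lit_sat_def by fastforce
    then have "z \<le> absz (snd t) + nmul (\<Sum>i<N. nat \<bar>fst t i\<bar>) S"
      using nonpos_positive_coeff_bound[OF v env S _ t(2)] by simp
    ultimately show ?thesis by (meson add_mono nmul_mono_left[OF S] order_trans)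
  next
    case False
    define P where "P = prod_list (map lit_mod C)"
    have "P \<ge> 1" unfolding P_def using wf C(1) prod_lit_mod_pos unfolding wf_dnf_def by blast
    then have Pe: "0 < nmul P e" using nmul_strict_mono_left[OF zgroup_pos[OF z], of 0 P] by simp
    have "conj_sat N (env(v := z + nmul P e)) C"
      unfolding P_def using False zgroup_pos[OF z]
      by (intro conj_sat_shift_up[OF v C(2)]) (auto simp: not_less)
    then have "z + nmul P e = z" using sol C(1) unfolding dnf_sat_def by blast
    then show ?thesis using Pe by simp
  qed
qed

lemma psat_unique_solution_bound:
  fixes e :: "'z::linordered_ab_group_add"
  assumes z: "zgroup e"
  shows "\<exists>b c. 0 \<le> b \<and> (\<forall>env S u. 0 \<le> S \<longrightarrow> (\<forall>i. i \<noteq> 0 \<longrightarrow> 0 \<le> env i \<and> env i \<le> S)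
    \<longrightarrow> (\<forall>z'. psat e (env(0 := z')) \<psi> \<longleftrightarrow> z' = u) \<longrightarrow> u \<le> b + nmul c S)"
proof -
  define N where "N = Suc (Max (insert 0 (form_vars \<psi>)))"
  have "finite (insert 0 (form_vars \<psi>))" by (simp add: finite_form_vars)
  then have "form_vars \<psi> \<subseteq> {..<N}" unfolding N_def using Max_ge by (auto simp: less_Suc_eq_le)
  then obtain F where wf: "wf_dnf F" and F: "\<And>env. psat e env \<psi> \<longleftrightarrow> dnf_sat N env F"
    using presburger_qe[OF z] by blast
  have N: "0 < N" unfolding N_def by simp
  show ?thesis
  proof (intro exI[of _ "dnf_const_size F"] exI[of _ "dnf_coeff_size N F"] conjI allI impI)
    fix env S u assume S: "0 \<le> S" and "\<forall>i. i \<noteq> 0 \<longrightarrow> 0 \<le> env i \<and> env i \<le> S"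
      and "\<forall>z'. psat e (env(0 := z')) \<psi> \<longleftrightarrow> z' = u"
    then show "u \<le> dnf_const_size F + nmul (dnf_coeff_size N F) S"
      by (intro dnf_unique_solution_bound[where env = env, OF z N wf _ S]) (auto simp: F)
  qed (rule dnf_const_size_nonneg)
qed

section \<open>The divisible hull and the topology of \<open>\<Omega>\<close>\<close>

context
  fixes iota :: "'z::linordered_ab_group_add \<Rightarrow> 'q::linordered_ab_group_add"
  assumes hull: "divisible_hull iota"
begin

lemma iota_add: "iota (a + b) = iota a + iota b"
  using hull unfolding divisible_hull_def by blast

lemma iota_0: "iota 0 = 0"
  using iota_add[of 0 0] by simp

lemma iota_strict_mono: "a < b \<Longrightarrow> iota a < iota b"
  using hull unfolding divisible_hull_def by blast

lemma iota_less_iff: "iota a < iota b \<longleftrightarrow> a < b"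
proof
  assume "iota a < iota b"
  then show "a < b" using iota_strict_mono[of b a] by (cases a b rule: linorder_cases) auto
qed (rule iota_strict_mono)

lemma iota_le_iff: "iota a \<le> iota b \<longleftrightarrow> a \<le> b"
  using iota_less_iff[of b a] by (simp add: not_less[symmetric])

lemma iota_eq_iff: "iota a = iota b \<longleftrightarrow> a = b"
  using iota_le_iff[of a b] iota_le_iff[of b a] by (auto intro: antisym)

lemma iota_diff: "iota (a - b) = iota a - iota b"
  using iota_add[of "a - b" b] by (simp add: eq_diff_eq)

lemma iota_nmul: "iota (nmul n a) = nmul n (iota a)"
  by (rule nmul_hom) (rule iota_add)

lemma iota_sum: "iota (sum g S) = (\<Sum>i\<in>S. iota (g i))"
  using sum_comp_morphism[of iota g S] iota_0 iota_add by (simp add: comp_def)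

text \<open>If \<open>n q = iota w\<close> and \<open>n d = iota e\<close>, then \<open>iota y\<close> within \<open>d\<close> of \<open>q\<close> gives
  \<open>|n y - w| < e\<close>, hence \<open>n y = w\<close>.\<close>
lemma iota_image_discrete:
  fixes e :: 'z and q :: 'q
  assumes z: "zgroup e"
  shows "\<exists>d>0. \<forall>y. q - d < iota y \<and> iota y < q + d \<longrightarrow> iota y = q"
proof -
  obtain n w where n: "n \<ge> 1" and nw: "nmul n q = iota w"
    using hull unfolding divisible_hull_def by blast
  obtain d where d: "nmul n d = iota e" using hull n unfolding divisible_hull_def by blast
  have "0 < iota e" using iota_less_iff[of 0 e] iota_0 zgroup_pos[OF z] by simp
  then have "0 < d" using d nmul_mono[of d 0 n] by (auto simp: not_less[symmetric])
  moreover have "iota y = q" if y: "q - d < iota y" "iota y < q + d" for y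
  proof -
    have "nmul n (iota y - q) < nmul n d" "nmul n (q - iota y) < nmul n d"
      using y n by (simp_all add: nmul_strict_mono algebra_simps)
    then have "nmul n y - w < e" "w - nmul n y < e"
      using d nw by (simp_all add: iota_diff iota_nmul nmul_diff_right flip: iota_less_iff)
    then have "nmul n y = w"
      using zgroup_least_pos[OF z, of "nmul n y - w"] zgroup_least_pos[OF z, of "w - nmul n y"]
      by (cases "nmul n y" w rule: linorder_cases) auto
    then have "nmul n (iota y) = nmul n q" using nw by (simp flip: iota_nmul)
    then show ?thesis using nmul_inj[OF n] by blast
  qed
  ultimately show ?thesis by blast
qed

end

definition open_interval :: "'q::linorder \<Rightarrow> 'q \<Rightarrow> 'q ext set" where
  "open_interval a b = {y. eless (Fin a) y \<and> eless y (Fin b)}"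

definition ray :: "'q::linorder \<Rightarrow> 'q ext set" where
  "ray a = {y. eless (Fin a) y}"

lemma mem_open_interval: "y \<in> open_interval a b \<longleftrightarrow> (\<exists>q. y = Fin q \<and> a < q \<and> q < b)"
  by (cases y) (auto simp: open_interval_def)

lemma mem_ray: "y \<in> ray a \<longleftrightarrow> y = PInf \<or> (\<exists>q. y = Fin q \<and> a < q)"
  by (cases y) (auto simp: ray_def)

lemma openin_open_interval: "openin Omega_top (open_interval a b)"
  unfolding Omega_top_def open_interval_def by (rule topology_generated_by_Basis) blast

lemma openin_ray: "openin Omega_top (ray a)"
  unfolding Omega_top_def ray_def by (rule topology_generated_by_Basis) blast

lemma topspace_Omega_top:
  assumes "0 < (c::'q::linordered_ab_group_add)"
  shows "topspace (Omega_top :: 'q ext topology) = UNIV"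
proof -
  have "y \<in> ray (if y = PInf then 0 else eval y - c)" for y :: "'q ext"
    using assms by (cases y) (auto simp: mem_ray)
  then show ?thesis using openin_ray openin_subset by blast
qed

lemma topspace_Omega_m_top:
  assumes "0 < (c::'q::linordered_ab_group_add)"
  shows "topspace (Omega_m_top m :: (nat \<Rightarrow> 'q ext) topology) = PiE {1..m} (\<lambda>_. UNIV)"
  unfolding Omega_m_top_def using topspace_Omega_top[OF assms] by simp

lemma openin_Omega_m_box:
  assumes "0 < (c::'q::linordered_ab_group_add)"
    and "\<And>i. i \<in> {1..m} \<Longrightarrow> U i = UNIV \<or> openin Omega_top (U i)"
  shows "openin (Omega_m_top m :: (nat \<Rightarrow> 'q ext) topology) (PiE {1..m} U)"
  unfolding Omega_m_top_def openin_PiE_gen using assms topspace_Omega_top[OF assms(1)]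
  by (metis (no_types, lifting) finite_atLeastAtMost finite_subset mem_Collect_eq subsetI openin_topspace)

lemma Omega_basis_PInf:
  assumes "U \<in> {{y. eless a y \<and> eless y b} | a b. True} \<union> {{y. eless a y} | a. True}"
    and "PInf \<in> U"
  obtains a where "U = ray a"
proof -
  obtain a where "U = {y. eless a y}" using assms by auto
  moreover from this obtain a' where "a = Fin a'" using assms(2) by (cases a) auto
  ultimately show thesis using that by (simp add: ray_def)
qed

lemma continuous_map_Omega_top_local:
  fixes f :: "'a \<Rightarrow> 'q::linordered_ab_group_add ext" and c :: 'q
  assumes c: "0 < c"
    and local: "\<And>p U. p \<in> topspace X \<Longrightarrow> f p \<in> U \<Longrightarrow>
      U \<in> {{y. eless a y \<and> eless y b} | a b. True} \<union> {{y. eless a y} | a. True} \<Longrightarrow>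
      \<exists>W. openin X W \<and> p \<in> W \<and> f ` W \<subseteq> U"
  shows "continuous_map X Omega_top f"
  unfolding Omega_top_def
proof (rule continuous_on_generated_topo)
  have "\<Union> ({{y. eless a y \<and> eless y b} | a b. True} \<union> {{y. eless a y} | a. True}) = (UNIV :: 'q ext set)"
    using topspace_Omega_top[OF c] unfolding Omega_top_def topology_generated_by_topspace .
  then show "f ` topspace X \<subseteq> \<Union> ({{y. eless a y \<and> eless y b} | a b. True} \<union> {{y. eless a y} | a. True})"
    by (simp only: subset_UNIV)
  fix U :: "'q ext set" assume U: "U \<in> {{y. eless a y \<and> eless y b} | a b. True} \<union> {{y. eless a y} | a. True}"
  have "\<exists>W. openin X W \<and> p \<in> W \<and> W \<subseteq> f -` U \<inter> topspace X"
    if p: "p \<in> f -` U \<inter> topspace X" for p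
  proof -
    from p have "p \<in> topspace X" "f p \<in> U" by auto
    from local[OF this U] obtain W where "openin X W" "p \<in> W" "f ` W \<subseteq> U" by blast
    then show ?thesis using openin_subset[of X W] by (intro exI[of _ W]) (auto simp: image_subset_iff)
  qed
  then show "openin X (f -` U \<inter> topspace X)" by (intro openin_subopen[THEN iffD2]) blast
qed

section \<open>An affine majorant on a non-negative stratum\<close>

locale nonneg_stratum =
  fixes e :: "'z::linordered_ab_group_add" and iota :: "'z \<Rightarrow> 'q::linordered_ab_group_add"
    and m :: nat and I :: "nat set" and A :: "(nat \<Rightarrow> 'z ext) set"
  assumes zgroup: "zgroup e" and hull: "divisible_hull iota" and I_sub: "I \<subseteq> {1..m}"
    and A_sub: "A \<subseteq> F_I m I" and A_nonneg: "\<forall>x\<in>A. \<forall>i\<in>I. 0 \<le> eval (x i)"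
begin

lemma iota_e_pos: "0 < iota e"
  using iota_less_iff[OF hull, of 0 e] iota_0[OF hull] zgroup_pos[OF zgroup] by simp

lemma topspace_Omega_m: "topspace (Omega_m_top m :: (nat \<Rightarrow> 'q ext) topology) = PiE {1..m} (\<lambda>_. UNIV)"
  by (rule topspace_Omega_m_top[OF iota_e_pos])

lemma openin_box:
  "(\<And>i. i \<in> {1..m} \<Longrightarrow> U i = UNIV \<or> openin Omega_top (U i)) \<Longrightarrow>
    openin (Omega_m_top m :: (nat \<Rightarrow> 'q ext) topology) (PiE {1..m} U)"
  by (rule openin_Omega_m_box[OF iota_e_pos])

lemma lift_in_I: "x \<in> A \<Longrightarrow> i \<in> I \<Longrightarrow> lift m iota x i = Fin (iota (eval (x i)))"
  using A_sub I_sub by (cases "x i") (auto simp: F_I_def lift_def)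

lemma lift_notin_I:
  assumes "x \<in> A" "i \<in> {1..m}" "i \<notin> I"
  shows "lift m iota x i = PInf"
proof -
  have "x i = PInf" using assms A_sub unfolding F_I_def by blast
  then show ?thesis using assms(2) by (simp add: lift_def)
qed

abbreviation closureA :: "(nat \<Rightarrow> 'q ext) set" where
  "closureA \<equiv> gclosure m iota A"

lemma closureA_subset: "closureA \<subseteq> PiE {1..m} (\<lambda>_. UNIV)"
  using closure_of_subset_topspace[of "Omega_m_top m" "lift m iota ` A"]
  unfolding gclosure_def topspace_Omega_m .

lemma closureA_meets:
  "p \<in> closureA \<Longrightarrow> openin (Omega_m_top m) W \<Longrightarrow> p \<in> W \<Longrightarrow> \<exists>x\<in>A. lift m iota x \<in> W"
  unfolding gclosure_def in_closure_of by blast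

lemma closureA_outside_I:
  assumes p: "p \<in> closureA" and j: "j \<in> {1..m}" "j \<notin> I"
  shows "p j = PInf"
proof (rule ccontr)
  assume "p j \<noteq> PInf"
  then obtain q where q: "p j = Fin q" by (cases "p j") auto
  define W where "W = PiE {1..m} (\<lambda>i. if i = j then open_interval (q - iota e) (q + iota e) else UNIV)"
  have "openin (Omega_m_top m) W" unfolding W_def by (rule openin_box) (auto simp: openin_open_interval)
  moreover have "p \<in> W" using closureA_subset p q iota_e_pos unfolding W_def
    by (auto simp: mem_open_interval PiE_iff)
  ultimately obtain x where "x \<in> A" "lift m iota x \<in> W" using closureA_meets[OF p] by blast
  then show False using lift_notin_I j unfolding W_def by (fastforce simp: mem_open_interval PiE_iff)
qed

lemma closureA_nonneg:
  assumes p: "p \<in> closureA" and i: "i \<in> I" and q: "p i = Fin q"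
  shows "0 \<le> q"
proof (rule ccontr)
  assume neg: "\<not> 0 \<le> q"
  define W where "W = PiE {1..m} (\<lambda>j. if j = i then open_interval (q - iota e) 0 else UNIV)"
  have "openin (Omega_m_top m) W" unfolding W_def by (rule openin_box) (auto simp: openin_open_interval)
  moreover have "p \<in> W" using closureA_subset p q iota_e_pos neg unfolding W_def
    by (auto simp: mem_open_interval PiE_iff)
  ultimately obtain x where x: "x \<in> A" "lift m iota x \<in> W" using closureA_meets[OF p] by blast
  then have "iota (eval (x i)) < 0"
    using i I_sub lift_in_I[OF x(1) i] unfolding W_def by (fastforce simp: mem_open_interval PiE_iff)
  moreover have "0 \<le> iota (eval (x i))"
    using A_nonneg x(1) i iota_le_iff[OF hull, of 0] iota_0[OF hull] by metis
  ultimately show False by simp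
qed

definition gap :: "'q \<Rightarrow> 'q" where
  "gap q = (SOME d. 0 < d \<and> (\<forall>y. q - d < iota y \<and> iota y < q + d \<longrightarrow> iota y = q))"

lemma gap: "0 < gap q" "q - gap q < iota y \<Longrightarrow> iota y < q + gap q \<Longrightarrow> iota y = q"
  using someI_ex[OF iota_image_discrete[OF hull zgroup, of q]] unfolding gap_def by blast+

text \<open>A box around a point of the closure with finite \<open>I\<close>-coordinates in which the only
  lifted point is the point itself.\<close>
definition isolating_box :: "(nat \<Rightarrow> 'q ext) \<Rightarrow> (nat \<Rightarrow> 'q ext) set" where
  "isolating_box p = PiE {1..m} (\<lambda>i. if i \<in> I
     then open_interval (eval (p i) - gap (eval (p i))) (eval (p i) + gap (eval (p i))) else UNIV)"

lemma openin_isolating_box: "openin (Omega_m_top m) (isolating_box p)"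
  unfolding isolating_box_def by (rule openin_box) (auto simp: openin_open_interval)

lemma in_isolating_box:
  assumes "p \<in> closureA" "\<forall>i\<in>I. p i \<noteq> PInf"
  shows "p \<in> isolating_box p"
proof -
  have "p i \<in> open_interval (eval (p i) - gap (eval (p i))) (eval (p i) + gap (eval (p i)))"
    if "i \<in> I" for i
    using assms(2) that gap(1)[of "eval (p i)"] by (cases "p i") (auto simp: mem_open_interval)
  then show ?thesis using assms(1) closureA_subset unfolding isolating_box_def by (auto simp: PiE_iff)
qed

lemma isolating_box_mem:
  assumes "y \<in> isolating_box p" "i \<in> I"
  shows "y i \<in> open_interval (eval (p i) - gap (eval (p i))) (eval (p i) + gap (eval (p i)))"
proof -
  have "i \<in> {1..m}" using assms(2) I_sub by blast
  from PiE_mem[OF assms(1)[unfolded isolating_box_def] this] show ?thesis using assms(2) by simp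
qed

lemma isolating_box_finite: "y \<in> isolating_box p \<Longrightarrow> i \<in> I \<Longrightarrow> y i \<noteq> PInf"
  using isolating_box_mem[of y p i] by (auto simp: mem_open_interval)

lemma lift_in_isolating_box:
  assumes p: "p \<in> closureA" "\<forall>i\<in>I. p i \<noteq> PInf" and x: "x \<in> A" and w: "lift m iota x \<in> isolating_box p"
  shows "lift m iota x = p"
proof
  fix i
  consider "i \<notin> {1..m}" | "i \<in> {1..m}" "i \<notin> I" | "i \<in> I" using I_sub by blast
  then show "lift m iota x i = p i"
  proof cases
    case 1
    then show ?thesis using closureA_subset p(1) by (auto simp: lift_def PiE_def extensional_def)
  next
    case 2
    then show ?thesis using closureA_outside_I[OF p(1)] lift_notin_I[OF x] by simp
  next
    case 3
    then obtain a where a: "p i = Fin a" using p(2) by (cases "p i") auto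
    have "lift m iota x i \<in> open_interval (a - gap a) (a + gap a)"
      using isolating_box_mem[OF w 3] a by simp
    then have "iota (eval (x i)) = a" using gap(2) lift_in_I[OF x 3] by (simp add: mem_open_interval)
    then show ?thesis using lift_in_I[OF x 3] a by simp
  qed
qed

lemma closureA_finite_in_image:
  assumes "p \<in> closureA" "\<forall>i\<in>I. p i \<noteq> PInf"
  shows "p \<in> lift m iota ` A"
  using closureA_meets[OF assms(1) openin_isolating_box in_isolating_box[OF assms]]
    lift_in_isolating_box[OF assms] by force

lemma isolating_box_closureA:
  assumes p: "p \<in> closureA" "\<forall>i\<in>I. p i \<noteq> PInf" and p': "p' \<in> isolating_box p" "p' \<in> closureA"
  shows "p' = p"
proof -
  obtain x where "x \<in> A" "p' = lift m iota x"
    using closureA_finite_in_image[OF p'(2)] isolating_box_finite[OF p'(1)] by blast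
  then show ?thesis using lift_in_isolating_box[OF p] p'(1) by simp
qed

definition affine_ext :: "nat \<Rightarrow> 'z \<Rightarrow> (nat \<Rightarrow> 'q ext) \<Rightarrow> 'q ext" where
  "affine_ext \<alpha> \<beta> p = (if \<forall>i\<in>I. p i \<noteq> PInf
     then Fin (iota \<beta> + nmul \<alpha> (\<Sum>i\<in>I. eval (p i))) else PInf)"

lemma affine_ext_lift:
  "x \<in> A \<Longrightarrow> affine_ext \<alpha> \<beta> (lift m iota x) = Fin (iota (\<beta> + nmul \<alpha> (\<Sum>i\<in>I. eval (x i))))"
  by (simp add: affine_ext_def lift_in_I iota_sum[OF hull] iota_add[OF hull] iota_nmul[OF hull])

lemma affine_ext_gfrontier: "p \<in> gfrontier m iota A \<Longrightarrow> affine_ext \<alpha> \<beta> p = PInf"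
proof (rule ccontr)
  assume pf: "p \<in> gfrontier m iota A" and "affine_ext \<alpha> \<beta> p \<noteq> PInf"
  then have fin: "\<forall>i\<in>I. p i \<noteq> PInf" unfolding affine_ext_def by (auto split: if_splits)
  have "p \<in> closureA"
    using pf closure_of_mono[of "closureA - lift m iota ` A" closureA "Omega_m_top m"]
    unfolding gfrontier_def gclosure_def closure_of_closure_of by blast
  then obtain y where "y \<in> closureA - lift m iota ` A" "y \<in> isolating_box p"
    using pf openin_isolating_box in_isolating_box[OF _ fin] unfolding gfrontier_def in_closure_of
    by blast
  then show False using closureA_finite_in_image isolating_box_finite by blast
qed

lemma affine_ext_nbhd_infinite:
  assumes \<alpha>: "\<alpha> \<ge> 1" and p: "p \<in> closureA" and k: "k \<in> I" "p k = PInf"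
  shows "\<exists>W. openin (Omega_m_top m) W \<and> p \<in> W \<and> affine_ext \<alpha> \<beta> ` (closureA \<inter> W) \<subseteq> ray a"
proof -
  define W where "W = PiE {1..m} (\<lambda>i. if i = k then ray (a - iota \<beta>) else UNIV)"
  have km: "k \<in> {1..m}" using k(1) I_sub by blast
  have "affine_ext \<alpha> \<beta> p' \<in> ray a" if p': "p' \<in> closureA" "p' \<in> W" for p'
  proof (cases "\<forall>i\<in>I. p' i \<noteq> PInf")
    case True
    have nonneg: "0 \<le> eval (p' i)" if "i \<in> I" for i
      using True closureA_nonneg[OF p'(1) that] that by (cases "p' i") auto
    have "p' k \<in> ray (a - iota \<beta>)" using PiE_mem[OF p'(2)[unfolded W_def] km] by simp
    then obtain t where t: "p' k = Fin t" "a - iota \<beta> < t" using True k(1) by (auto simp: mem_ray)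
    have "t = (\<Sum>i\<in>{k}. eval (p' i))" using t(1) by simp
    also have "\<dots> \<le> (\<Sum>i\<in>I. eval (p' i))"
      using k(1) nonneg finite_subset[OF I_sub] by (intro sum_mono2) auto
    also have "\<dots> \<le> nmul \<alpha> (\<Sum>i\<in>I. eval (p' i))" using nonneg by (intro nmul_ge_self sum_nonneg \<alpha>)
    finally have "a - iota \<beta> < nmul \<alpha> (\<Sum>i\<in>I. eval (p' i))" by (rule less_le_trans[OF t(2)])
    then show ?thesis using True by (simp add: affine_ext_def mem_ray diff_less_eq add.commute)
  qed (auto simp: affine_ext_def mem_ray)
  moreover have "openin (Omega_m_top m) W" unfolding W_def by (rule openin_box) (auto simp: openin_ray)
  moreover have "p \<in> W" using closureA_subset p k(2) unfolding W_def by (auto simp: PiE_iff mem_ray)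
  ultimately show ?thesis by blast
qed

lemma affine_ext_continuous:
  assumes \<alpha>: "\<alpha> \<ge> 1"
  shows "continuous_map (subtopology (Omega_m_top m) closureA) Omega_top (affine_ext \<alpha> \<beta>)"
proof (rule continuous_map_Omega_top_local[OF iota_e_pos])
  fix p U assume "p \<in> topspace (subtopology (Omega_m_top m) closureA)" and pU: "affine_ext \<alpha> \<beta> p \<in> U"
    and U: "U \<in> {{y. eless a y \<and> eless y b} | a b. True} \<union> {{y. eless a y} | a. True}"
  then have p: "p \<in> closureA" by simp
  have "\<exists>W. openin (Omega_m_top m) W \<and> p \<in> W \<and> affine_ext \<alpha> \<beta> ` (closureA \<inter> W) \<subseteq> U"
  proof (cases "\<forall>i\<in>I. p i \<noteq> PInf")
    case True
    then show ?thesis using isolating_box_closureA[OF p True] openin_isolating_box in_isolating_box[OF p True] pU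
      by blast
  next
    case False
    then obtain k where "k \<in> I" "p k = PInf" by blast
    moreover have "PInf \<in> U" using pU False by (simp add: affine_ext_def)
    then obtain a where "U = ray a" using Omega_basis_PInf[OF U] by blast
    ultimately show ?thesis using affine_ext_nbhd_infinite[OF \<alpha> p] by blast
  qed
  then show "\<exists>W. openin (subtopology (Omega_m_top m) closureA) W \<and> p \<in> W \<and> affine_ext \<alpha> \<beta> ` W \<subseteq> U"
    using p by (meson IntI openin_subtopology_Int2)
qed

end

context nonneg_stratum
begin

lemma coord_env_bounds:
  assumes "x \<in> A"
  shows "0 \<le> coord_env I x i \<and> coord_env I x i \<le> (\<Sum>i\<in>I. eval (x i))"
proof (cases "i \<in> I")
  case True
  then have "(\<Sum>i\<in>{i}. eval (x i)) \<le> (\<Sum>i\<in>I. eval (x i))"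
    using assms A_nonneg finite_subset[OF I_sub] by (intro sum_mono2) auto
  then show ?thesis using True assms A_nonneg by (simp add: coord_env_def)
next
  case False
  then show ?thesis using assms A_nonneg by (simp add: coord_env_def sum_nonneg)
qed

lemma definable_fun_graph:
  assumes "definable_fun e iota m A (\<lambda>x. Fin (g x))" and "A \<noteq> {}"
  obtains n \<psi> where "n \<ge> 1" and "\<And>x. x \<in> A \<Longrightarrow> \<exists>u. nmul n (g x) = iota u"
    and "\<And>x z. x \<in> A \<Longrightarrow> psat e ((coord_env I x)(0 := z)) \<psi> \<longleftrightarrow> nmul n (g x) = iota z"
proof -
  obtain n where n: "n \<ge> 1" and range: "\<forall>x\<in>A. emul n (Fin (g x)) \<in> range (emap iota)"
    and graphs: "\<forall>K\<subseteq>{1..m}. (\<forall>x\<in>A \<inter> F_I m K. Fin (g x) = PInf) \<or>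
      ((\<forall>x\<in>A \<inter> F_I m K. Fin (g x) \<noteq> PInf) \<and>
       (\<exists>\<psi>. \<forall>x\<in>F_I m K. \<forall>z. (x \<in> A \<and> emul n (Fin (g x)) = Fin (iota z))
          \<longleftrightarrow> psat e ((coord_env K x)(0 := z)) \<psi>))"
    using assms(1) unfolding definable_fun_def by blast
  have "\<not> (\<forall>x\<in>A \<inter> F_I m I. Fin (g x) = PInf)" using assms(2) A_sub by auto
  then obtain \<psi> where \<psi>: "\<forall>x\<in>F_I m I. \<forall>z.
      (x \<in> A \<and> emul n (Fin (g x)) = Fin (iota z)) \<longleftrightarrow> psat e ((coord_env I x)(0 := z)) \<psi>"
    using graphs[rule_format, OF I_sub] by blast
  show thesis
  proof (rule that[OF n])
    fix x assume x: "x \<in> A"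
    obtain w where "Fin (nmul n (g x)) = emap iota w" using range x by (auto simp: emul_def)
    then show "\<exists>u. nmul n (g x) = iota u" by (cases w) auto
    fix z show "psat e ((coord_env I x)(0 := z)) \<psi> \<longleftrightarrow> nmul n (g x) = iota z"
      using \<psi>[rule_format, of x z] x A_sub by (auto simp: emul_def)
  qed
qed

lemma definable_fun_affine_bound:
  assumes "definable_fun e iota m A (\<lambda>x. Fin (g x))"
  shows "\<exists>b c. 0 \<le> b \<and> (\<forall>x\<in>A. g x \<le> iota (b + nmul c (\<Sum>i\<in>I. eval (x i))))"
proof (cases "A = {}")
  case False
  obtain n \<psi> where n: "n \<ge> 1" and range: "\<And>x. x \<in> A \<Longrightarrow> \<exists>u. nmul n (g x) = iota u"
    and \<psi>: "\<And>x z. x \<in> A \<Longrightarrow> psat e ((coord_env I x)(0 := z)) \<psi> \<longleftrightarrow> nmul n (g x) = iota z"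
    using definable_fun_graph[OF assms False] by blast
  obtain b c where b: "0 \<le> b" and bc: "\<forall>env S u. 0 \<le> S \<longrightarrow> (\<forall>i. i \<noteq> 0 \<longrightarrow> 0 \<le> env i \<and> env i \<le> S)
      \<longrightarrow> (\<forall>z'. psat e (env(0 := z')) \<psi> \<longleftrightarrow> z' = u) \<longrightarrow> u \<le> b + nmul c S"
    using psat_unique_solution_bound[OF zgroup, of \<psi>] by blast
  have "g x \<le> iota (b + nmul c (\<Sum>i\<in>I. eval (x i)))" if x: "x \<in> A" for x
  proof -
    define S where "S = (\<Sum>i\<in>I. eval (x i))"
    have S: "0 \<le> S" unfolding S_def using x A_nonneg by (simp add: sum_nonneg)
    obtain u where u: "nmul n (g x) = iota u" using range[OF x] by blast
    have "psat e ((coord_env I x)(0 := z')) \<psi> \<longleftrightarrow> z' = u" for z'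
      using \<psi>[OF x] u iota_eq_iff[OF hull] by metis
    then have "u \<le> b + nmul c S"
      using bc[rule_format, OF S] coord_env_bounds[OF x] unfolding S_def by blast
    then have ng: "nmul n (g x) \<le> iota (b + nmul c S)" using u by (simp add: iota_le_iff[OF hull])
    show ?thesis
    proof (cases "g x \<le> 0")
      case True
      have "0 \<le> iota (b + nmul c S)"
        using b nmul_nonneg[OF S] iota_le_iff[OF hull, of 0] iota_0[OF hull] by simp
      then show ?thesis using True unfolding S_def by simp
    next
      case False
      then have "g x \<le> nmul n (g x)" using nmul_ge_self[of "g x" n] n by simp
      then show ?thesis using ng unfolding S_def by (rule order_trans)
    qed
  qed
  with b show ?thesis by blast
qed (auto intro!: exI[of _ 0])

lemma affine_majorant:
  assumes "\<alpha> \<ge> 1" and "0 < \<beta>"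
  defines "f \<equiv> \<lambda>x. \<beta> + nmul \<alpha> (\<Sum>i\<in>I. eval (x i))"
  shows "integrally_affine I A f" and "\<forall>x\<in>A. 0 < f x"
    and "cont_extension m iota A f (affine_ext \<alpha> \<beta>)"
proof -
  have f: "f x = \<beta> + (\<Sum>i\<in>I. zmul (int \<alpha>) (eval (x i)))" for x
    unfolding f_def zmul_sum[symmetric] by (simp only: zmul_of_nat)
  show "integrally_affine I A f"
    unfolding integrally_affine_def by (intro exI[of _ \<beta>] exI[of _ "\<lambda>_. int \<alpha>"] ballI) (rule f)
  show "\<forall>x\<in>A. 0 < f x"
    using add_pos_nonneg[OF assms(2) nmul_nonneg] A_nonneg by (simp add: f_def sum_nonneg)
  show "cont_extension m iota A f (affine_ext \<alpha> \<beta>)"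
    unfolding cont_extension_def using affine_ext_continuous[OF assms(1)] affine_ext_lift
    by (simp add: f_def)
qed

end

lemma common_affine_bound:
  fixes iota :: "'z::linordered_ab_group_add \<Rightarrow> 'q::linordered_ab_group_add" and r :: nat
  assumes hull: "divisible_hull iota" and S: "\<And>x. x \<in> A \<Longrightarrow> 0 \<le> S x"
    and bounds: "\<forall>j<r. \<exists>b c. 0 \<le> b \<and> (\<forall>x\<in>A. g j x \<le> iota (b + nmul c (S x)))"
  shows "\<exists>b c. 0 \<le> b \<and> (\<forall>j<r. \<forall>x\<in>A. g j x \<le> iota (b + nmul c (S x)))"
  using bounds
proof (induction r)
  case 0
  show ?case by (intro exI[of _ 0]) simp
next
  case (Suc r)
  then obtain b c where b: "0 \<le> b" and bc: "\<forall>j<r. \<forall>x\<in>A. g j x \<le> iota (b + nmul c (S x))"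
    by auto
  obtain b' c' where b': "0 \<le> b'" and bc': "\<forall>x\<in>A. g r x \<le> iota (b' + nmul c' (S x))"
    using Suc.prems by blast
  have le: "b + nmul c (S x) \<le> (b + b') + nmul (c + c') (S x)"
    "b' + nmul c' (S x) \<le> (b + b') + nmul (c + c') (S x)" if "x \<in> A" for x
    using b b' nmul_nonneg[OF S[OF that]] by (simp_all add: nmul_add add_mono add_increasing2 algebra_simps)
  have "g j x \<le> iota ((b + b') + nmul (c + c') (S x))" if "j < Suc r" "x \<in> A" for j x
  proof (cases "j = r")
    case True
    then show ?thesis using bc' le(2)[OF that(2)] that(2) iota_le_iff[OF hull] by (meson order_trans)
  next
    case False
    then show ?thesis using bc le(1)[OF that(2)] that iota_le_iff[OF hull] by (meson less_SucE order_trans)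
  qed
  then show ?case using b b' by (intro exI[of _ "b + b'"] exI[of _ "c + c'"]) simp
qed

theorem proposition4p1:
  fixes e :: "'z::linordered_ab_group_add"
    and iota :: "'z \<Rightarrow> 'q::linordered_ab_group_add"
    and m :: nat and I :: "nat set"
    and A :: "(nat \<Rightarrow> 'z ext) set"
    and r :: nat and fs :: "nat \<Rightarrow> (nat \<Rightarrow> 'z ext) \<Rightarrow> 'q"
  assumes "zgroup e"
    and "divisible_hull iota"
    and "I \<subseteq> {1..m}"
    and "A \<subseteq> F_I m I"
    and "definable_set e m A"
    and "\<forall>x\<in>A. \<forall>i\<in>I. 0 \<le> eval (x i)"
    and "\<forall>j<r. definable_fun e iota m A (\<lambda>x. Fin (fs j x))"
  shows "\<exists>f :: (nat \<Rightarrow> 'z ext) \<Rightarrow> 'z. \<exists>fbar.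
           integrally_affine I A f \<and>
           largely_continuous m iota A f \<and>
           (\<forall>x\<in>A. 0 < f x) \<and>
           (\<forall>x\<in>A. \<forall>j<r. fs j x \<le> iota (f x)) \<and>
           cont_extension m iota A f fbar \<and>
           (\<forall>p\<in>gfrontier m iota A. fbar p = PInf) \<and>
           (\<exists>(\<alpha>::int) \<beta>. 0 < \<alpha> \<and> (\<forall>x\<in>A. f x = \<beta> + zmul \<alpha> (\<Sum>i\<in>I. eval (x i))))"
proof -
  interpret nonneg_stratum e iota m I A using assms(1-4,6) by unfold_locales
  define S where "S x = (\<Sum>i\<in>I. eval (x i))" for x :: "nat \<Rightarrow> 'z ext"
  have S: "0 \<le> S x" if "x \<in> A" for x using that A_nonneg by (simp add: S_def sum_nonneg)
  have "\<forall>j<r. \<exists>b c. 0 \<le> b \<and> (\<forall>x\<in>A. fs j x \<le> iota (b + nmul c (S x)))"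
    using definable_fun_affine_bound assms(7) unfolding S_def by simp
  from common_affine_bound[OF hull S this] obtain b c
    where b: "0 \<le> b" and bound: "\<forall>j<r. \<forall>x\<in>A. fs j x \<le> iota (b + nmul c (S x))"
    by blast
  define f where "f = (\<lambda>x. (e + b) + nmul (Suc c) (\<Sum>i\<in>I. eval (x i)))"
  have majorant: "\<forall>x\<in>A. \<forall>j<r. fs j x \<le> iota (f x)"
  proof (intro ballI allI impI)
    fix x j assume x: "x \<in> A" and j: "j < r"
    have "b + nmul c (S x) \<le> (b + nmul c (S x)) + (e + S x)"
      using zgroup_pos[OF zgroup] S[OF x] by simp
    also have "\<dots> = f x" by (simp add: f_def S_def algebra_simps)
    finally show "fs j x \<le> iota (f x)" using bound x j order_trans iota_le_iff[OF hull] by metis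
  qed
  have "0 < e + b" using zgroup_pos[OF zgroup] b by (rule add_pos_nonneg)
  then have "integrally_affine I A f" "\<forall>x\<in>A. 0 < f x"
    "cont_extension m iota A f (affine_ext (Suc c) (e + b))"
    using affine_majorant[of "Suc c" "e + b"] unfolding f_def by simp_all
  moreover have "\<exists>(\<alpha>::int) \<beta>. 0 < \<alpha> \<and> (\<forall>x\<in>A. f x = \<beta> + zmul \<alpha> (\<Sum>i\<in>I. eval (x i)))"
    by (intro exI[of _ "int (Suc c)"] exI[of _ "e + b"]) (simp add: f_def del: of_nat_Suc)
  ultimately show ?thesis
    using majorant affine_ext_gfrontier unfolding largely_continuous_def by blast
qed

end
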